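(* Let $k\ge1$ and $\tilde d=(d_1,\dots,d_k)$ with integers $d_i\ge 2$. Consider the cone percolation process with radius of influence $R$ on the rooted $k$-periodic tree $\mathbb{T}^+_{\tilde d}$, and let $\mathbb{P}_+$ denote its law and $V$ the survival event. (I) If $\sum_{i=0}^{k-1} c_i\,\mathbb{E}\big(G^R I_i(R)\big) > 1+p_0$, then $\mathbb{P}_+(V)>0$. (II) If $\sum_{i=0}^{k-1}\bar c_i\,\mathbb{E}\big(h_i(R) I_i(R)\big)\le 1$, then $\mathbb{P}_+(V)=0$.
   Context: Cone percolation process: Let $\mathbb{T}$ be a tree with origin $\mathcal{O}$ and graph distance $d(\cdot,\cdot)$. Write $u\le v$ if $u$ lies on the path from $\mathcal{O}$ to $v$. Let $R$ be a random variable with values in $\{0,1,2,\dots\}$, $p_k=\mathbb{P}(R=k)$, and assume $p_0\in(0,1)$. Let $\{R_v\}$ be i.i.d. copies of $R$ indexed by the vertices. For each vertex $u$ let $B_u=\{v: u\le v,\ d(u,v)\le R_u\}$. Set $I_0=\{\mathcal{O}\}$, $I_{n+1}=\bigcup_{u\in I_n}B_u$, $I=\bigcup_n I_n$; survival is the event $V=\{|I|=\infty\}$. Periodic trees: the $k$-periodic tree $\mathbb{T}_{\tilde d}$ is the tree with origin $\mathcal{O}$ in which every vertex at distance $nk+i-1$ from $\mathcal{O}$ ($n\in\{0,1,2,\dots\}$, $i\in\{1,\dots,k\}$) has degree $d_i+1$. The rooted version $\mathbb{T}^+_{\tilde d}$ is obtained by choosing a neighbour $u$ of $\mathcal{O}$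 and deleting all vertices $w$ with $u\le w$; thus every vertex at distance $nk+i-1$ from $\mathcal{O}$ has exactly $d_i$ children. Notation: $d_{(1)}\le\dots\le d_{(k)}$ are the entries of $\tilde d$ in increasing order; $G=(\prod_{j=1}^k d_j)^{1/k}$; $c_0=\bar c_0=1$, and for $i=1,\dots,k-1$, $c_i=\prod_{j=1}^i d_{(j)}/G^i$, $\bar c_i=\prod_{j=k+1-i}^k d_{(j)}/G^i$. For $i=0,\dots,k-1$, $I_i(R)=1$ if $R=nk+i$ for some integer $n\ge0$ and $I_i(R)=0$ otherwise. Let $\underline{x}_{n,0}=(\prod_{j=1}^k d_j)^n$ and $\underline{x}_{n,i}=(\prod_{j=1}^k d_j)^n\prod_{j=1}^i d_{(j)}$ for $i\ge1$. For $R\equiv i \pmod k$, with $N=(R-i)/k$, $$h_i(R)=\Big[\sum_{m=0}^{N-1}\sum_{j=0}^{k-1}(\underline{x}_{m,j})^{-1}+\sum_{j=0}^{i-1}(\underline{x}_{N,j})^{-1}\Big]G^R$$ (the quantity $h_i(R)$ only appears multiplied by $I_i(R)$). *)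

theory Defs
  imports "HOL-Probability.Probability"
begin

text \<open>A vertex at distance m from the origin (the empty list) has d (m mod k) children,
  where d 0, ..., d (k-1) stand for d_1, ..., d_k.\<close>
definition tree_plus :: "nat \<Rightarrow> (nat \<Rightarrow> nat) \<Rightarrow> nat list set" where
  "tree_plus k d = {xs. \<forall>j<length xs. xs ! j < d (j mod k)}"

definition cone :: "nat \<Rightarrow> (nat \<Rightarrow> nat) \<Rightarrow> (nat list \<Rightarrow> nat) \<Rightarrow> nat list \<Rightarrow> nat list set" where
  "cone k d \<omega> u = {v \<in> tree_plus k d. (\<exists>w. v = u @ w) \<and> length v - length u \<le> \<omega> u}"

fun infected :: "nat \<Rightarrow> (nat \<Rightarrow> nat) \<Rightarrow> (nat list \<Rightarrow> nat) \<Rightarrow> nat \<Rightarrow> nat list set" where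
  "infected k d \<omega> 0 = {[]}"
| "infected k d \<omega> (Suc n) = (\<Union>u\<in>infected k d \<omega> n. cone k d \<omega> u)"

definition survives :: "nat \<Rightarrow> (nat \<Rightarrow> nat) \<Rightarrow> (nat list \<Rightarrow> nat) \<Rightarrow> bool" where
  "survives k d \<omega> \<longleftrightarrow> infinite (\<Union>n. infected k d \<omega> n)"

definition perc_space :: "nat pmf \<Rightarrow> (nat list \<Rightarrow> nat) measure" where
  "perc_space p = PiM UNIV (\<lambda>_. measure_pmf p)"

definition survival_event :: "nat \<Rightarrow> (nat \<Rightarrow> nat) \<Rightarrow> nat pmf \<Rightarrow> (nat list \<Rightarrow> nat) set" where
  "survival_event k d p = {\<omega> \<in> space (perc_space p). survives k d \<omega>}"

definition Gm :: "nat \<Rightarrow> (nat \<Rightarrow> nat) \<Rightarrow> real" where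
  "Gm k d = (\<Prod>j<k. real (d j)) powr (1 / real k)"

text \<open>sorted_d k d ! (j-1) = d_(j), the j-th smallest entry.\<close>
definition sorted_d :: "nat \<Rightarrow> (nat \<Rightarrow> nat) \<Rightarrow> nat list" where
  "sorted_d k d = sort (map d [0..<k])"

definition cc :: "nat \<Rightarrow> (nat \<Rightarrow> nat) \<Rightarrow> nat \<Rightarrow> real" where
  "cc k d i = (\<Prod>j<i. real (sorted_d k d ! j)) / Gm k d ^ i"

definition cbar :: "nat \<Rightarrow> (nat \<Rightarrow> nat) \<Rightarrow> nat \<Rightarrow> real" where
  "cbar k d i = (\<Prod>j\<in>{k-i..<k}. real (sorted_d k d ! j)) / Gm k d ^ i"

definition Ind :: "nat \<Rightarrow> nat \<Rightarrow> nat \<Rightarrow> real" where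
  "Ind k i r = (if \<exists>n. r = n * k + i then 1 else 0)"

definition xlow :: "nat \<Rightarrow> (nat \<Rightarrow> nat) \<Rightarrow> nat \<Rightarrow> nat \<Rightarrow> real" where
  "xlow k d n j = (\<Prod>l<k. real (d l)) ^ n * (\<Prod>l<j. real (sorted_d k d ! l))"

definition hh :: "nat \<Rightarrow> (nat \<Rightarrow> nat) \<Rightarrow> nat \<Rightarrow> nat \<Rightarrow> real" where
  "hh k d i r = (let N = (r - i) div k in
     ((\<Sum>m<N. \<Sum>j<k. 1 / xlow k d m j) + (\<Sum>j<i. 1 / xlow k d N j)) * Gm k d ^ r)"

end

theory Submission
  imports Defs
begin

(*
  The subtree below a vertex u at depth m is the same kind of tree with branching
  offset m D, and the radii inside it, subconfig u, are again i.i.d.; all recursions below use this.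

  (I) Consider only chains that jump each time to distance exactly R below the current vertex,
  and let q_n be the probability that no such chain of n jumps starts at the root. Independence
  gives q_(n+1) <= p_0 + sum_(r >= 1) p_r q_n ^ N_r, where N_r is the least number of vertices r
  levels below any vertex (x_(N,i) in the paper). Since sum_r p_r N_r > 1 + p_0, Bernoulli's
  inequality provides z < 1 with p_0 + sum_(r >= 1) p_r z ^ N_r <= z; hence q_n <= z for all n and
  the process survives with probability at least 1 - z.

  (II) Let x be the largest survival probability of the process started at some depth (by
  periodicity attained at a depth m < k) and y the one at depth m + 1. Survival forces R >= 1 at
  the root and survival below some vertex of the root cone. Inclusion-exclusion for the two
  children of the root and the union bound for the other at most c'_i h_i(R) vertices of the cone
  give x <= (1 - p_0) (2 y - y^2 - 2 x) + x, which with y <= x forces y = 0 and then x = 0.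
*)

section \<open>Trees with depth-dependent branching\<close>

definition vertices :: "(nat \<Rightarrow> nat) \<Rightarrow> nat list set" where
  "vertices D = {xs. \<forall>j<length xs. xs ! j < D j}"

definition offset :: "nat \<Rightarrow> (nat \<Rightarrow> nat) \<Rightarrow> nat \<Rightarrow> nat" where
  "offset m D = (\<lambda>j. D (j + m))"

definition subconfig :: "nat list \<Rightarrow> (nat list \<Rightarrow> nat) \<Rightarrow> nat list \<Rightarrow> nat" where
  "subconfig u \<omega> = (\<lambda>w. \<omega> (u @ w))"

definition cone_at ::
    "(nat \<Rightarrow> nat) \<Rightarrow> (nat list \<Rightarrow> nat) \<Rightarrow> nat list \<Rightarrow> nat list set" where
  "cone_at D \<omega> u = {v \<in> vertices D. (\<exists>w. v = u @ w) \<and> length v - length u \<le> \<omega> u}"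

inductive reached :: "(nat \<Rightarrow> nat) \<Rightarrow> (nat list \<Rightarrow> nat) \<Rightarrow> nat list \<Rightarrow> bool"
  for D \<omega> where
  root: "reached D \<omega> []"
| step: "reached D \<omega> u \<Longrightarrow> v \<in> cone_at D \<omega> u \<Longrightarrow> reached D \<omega> v"

definition percolates :: "(nat \<Rightarrow> nat) \<Rightarrow> (nat list \<Rightarrow> nat) \<Rightarrow> bool" where
  "percolates D \<omega> \<longleftrightarrow> infinite {v. reached D \<omega> v}"

lemma offset_offset [simp]: "offset a (offset b D) = offset (a + b) D"
  by (simp add: offset_def add.assoc)

lemma offset_0 [simp]: "offset 0 D = D"
  by (simp add: offset_def)

lemma Nil_in_vertices [simp]: "[] \<in> vertices D"
  by (simp add: vertices_def)

lemma append_in_vertices_iff: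
  "u @ w \<in> vertices D \<longleftrightarrow> u \<in> vertices D \<and> w \<in> vertices (offset (length u) D)"
proof -
  have "(\<forall>j<length u + length w. (u @ w) ! j < D j) \<longleftrightarrow>
        (\<forall>j<length u. u ! j < D j) \<and> (\<forall>j<length w. w ! j < D (j + length u))"
    (is "?l \<longleftrightarrow> ?r")
  proof
    assume l: ?l
    show ?r
    proof (intro conjI allI impI)
      fix j assume "j < length u"
      then show "u ! j < D j" using l[rule_format, of j] by (simp add: nth_append)
    next
      fix j assume "j < length w"
      then show "w ! j < D (j + length u)"
        using l[rule_format, of "length u + j"] by (simp add: nth_append add.commute)
    qed
  next
    assume r: ?r
    show ?l
    proof (intro allI impI)
      fix j assume j: "j < length u + length w"
      show "(u @ w) ! j < D j"
      proof (cases "j < length u")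
        case False
        then show ?thesis
          using j r[THEN conjunct2, rule_format, of "j - length u"] by (simp add: nth_append)
      qed (use r in \<open>simp add: nth_append\<close>)
    qed
  qed
  then show ?thesis
    by (simp add: vertices_def offset_def)
qed

lemma finite_vertices_upto: "finite {v \<in> vertices D. length v \<le> r}"
proof (rule finite_subset)
  let ?B = "Max (D ` {..<r})"
  show "{v \<in> vertices D. length v \<le> r} \<subseteq> {xs. set xs \<subseteq> {..<?B} \<and> length xs \<le> r}"
  proof
    fix v assume v: "v \<in> {v \<in> vertices D. length v \<le> r}"
    have "x < ?B" if "x \<in> set v" for x
    proof -
      obtain j where j: "j < length v" "v ! j = x"
        using \<open>x \<in> set v\<close> by (auto simp: in_set_conv_nth)
      have "x < D j" using v j by (auto simp: vertices_def)
      also have "D j \<le> ?B" using j v by (intro Max_ge) auto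
      finally show ?thesis .
    qed
    then show "v \<in> {xs. set xs \<subseteq> {..<?B} \<and> length xs \<le> r}" using v by auto
  qed
  show "finite {xs. set xs \<subseteq> {..<?B} \<and> length xs \<le> r}"
    by (rule finite_lists_length_le) simp
qed

lemma reached_in_vertices: "reached D \<omega> v \<Longrightarrow> v \<in> vertices D"
  by (induction rule: reached.induct) (auto simp: cone_at_def)

lemma cone_at_Nil: "cone_at D \<omega> [] = {v \<in> vertices D. length v \<le> \<omega> []}"
  by (auto simp: cone_at_def)

lemma append_in_cone_at_iff:
  "u @ v \<in> cone_at D \<omega> (u @ w) \<longleftrightarrow>
     u \<in> vertices D \<and> v \<in> cone_at (offset (length u) D) (subconfig u \<omega>) w"
  by (auto simp: cone_at_def append_in_vertices_iff subconfig_def)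

lemma reached_append:
  assumes "reached (offset (length u) D) (subconfig u \<omega>) w" and "reached D \<omega> u"
  shows "reached D \<omega> (u @ w)"
  using assms(1)
proof (induction rule: reached.induct)
  case root
  then show ?case using assms(2) by simp
next
  case (step x v)
  then have "u @ v \<in> cone_at D \<omega> (u @ x)"
    using reached_in_vertices[OF assms(2)] append_in_cone_at_iff by blast
  then show ?case using step.IH reached.step by blast
qed

lemma reached_through_root_cone:
  assumes "reached D \<omega> x"
  shows "x \<in> cone_at D \<omega> [] \<or>
    (\<exists>u w. u \<in> cone_at D \<omega> [] \<and> u \<noteq> [] \<and> x = u @ w \<and>
           reached (offset (length u) D) (subconfig u \<omega>) w)"
  using assms
proof (induction rule: reached.induct)
  case root
  then show ?case by (simp add: cone_at_def)
next
  case (step x y)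
  from step.IH show ?case
  proof
    assume x: "x \<in> cone_at D \<omega> []"
    show ?case
    proof (cases "y \<in> cone_at D \<omega> []")
      case False
      then have "x \<noteq> []" using step.hyps(2) by auto
      from step.hyps(2) obtain w where w: "y = x @ w" by (auto simp: cone_at_def)
      then have "w \<in> cone_at (offset (length x) D) (subconfig x \<omega>) []"
        using step.hyps(2) append_in_cone_at_iff[of x w D \<omega> "[]"] by simp
      then have "reached (offset (length x) D) (subconfig x \<omega>) w"
        using reached.step[OF reached.root] by blast
      then show ?thesis using x \<open>x \<noteq> []\<close> w by blast
    qed simp
  next
    assume "\<exists>u w. u \<in> cone_at D \<omega> [] \<and> u \<noteq> [] \<and> x = u @ w \<and>
              reached (offset (length u) D) (subconfig u \<omega>) w"
    then obtain u w where uw: "u \<in> cone_at D \<omega> []" "u \<noteq> []" "x = u @ w"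
        "reached (offset (length u) D) (subconfig u \<omega>) w"
      by blast
    from step.hyps(2) uw(3) obtain z where z: "y = u @ w @ z"
      by (auto simp: cone_at_def)
    then have "w @ z \<in> cone_at (offset (length u) D) (subconfig u \<omega>) w"
      using step.hyps(2) uw(3) append_in_cone_at_iff[of u "w @ z"] by simp
    then have "reached (offset (length u) D) (subconfig u \<omega>) (w @ z)"
      using reached.step[OF uw(4)] by blast
    then show ?case using uw z by blast
  qed
qed

lemma percolates_iff_unbounded:
  "percolates D \<omega> \<longleftrightarrow> (\<forall>n. \<exists>v. reached D \<omega> v \<and> n \<le> length v)"
proof
  assume inf: "percolates D \<omega>"
  show "\<forall>n. \<exists>v. reached D \<omega> v \<and> n \<le> length v"
  proof (rule ccontr)
    assume "\<not> ?thesis"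
    then obtain n where "\<forall>v. reached D \<omega> v \<longrightarrow> length v < n" by (auto simp: not_le)
    then have "{v. reached D \<omega> v} \<subseteq> {v \<in> vertices D. length v \<le> n}"
      using reached_in_vertices by fastforce
    then have "finite {v. reached D \<omega> v}"
      using finite_vertices_upto by (rule finite_subset)
    then show False using inf by (simp add: percolates_def)
  qed
next
  assume unb: "\<forall>n. \<exists>v. reached D \<omega> v \<and> n \<le> length v"
  show "percolates D \<omega>"
    unfolding percolates_def
  proof
    assume "finite {v. reached D \<omega> v}"
    then have "finite (length ` {v. reached D \<omega> v})" by simp
    then obtain n where "\<forall>v. reached D \<omega> v \<longrightarrow> length v < n"
      by (meson finite_nat_set_iff_bounded imageI mem_Collect_eq)
    then show False using unb by (meson not_le)
  qed
qed

fun generation ::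
    "(nat \<Rightarrow> nat) \<Rightarrow> (nat list \<Rightarrow> nat) \<Rightarrow> nat \<Rightarrow> nat list set" where
  "generation D \<omega> 0 = {[]}"
| "generation D \<omega> (Suc n) = (\<Union>u\<in>generation D \<omega> n. cone_at D \<omega> u)"

lemma reached_iff_generation: "reached D \<omega> v \<longleftrightarrow> (\<exists>n. v \<in> generation D \<omega> n)"
proof
  assume "reached D \<omega> v"
  then show "\<exists>n. v \<in> generation D \<omega> n"
  proof (induction rule: reached.induct)
    case root
    then show ?case by (metis generation.simps(1) singletonI)
  next
    case (step u v)
    then obtain n where "u \<in> generation D \<omega> n" by auto
    then show ?case using step.hyps(2) by (intro exI[of _ "Suc n"]) auto
  qed
next
  assume "\<exists>n. v \<in> generation D \<omega> n"
  then obtain n where "v \<in> generation D \<omega> n" by blast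
  then show "reached D \<omega> v"
    by (induction n arbitrary: v) (auto intro: reached.intros)
qed

definition level :: "(nat \<Rightarrow> nat) \<Rightarrow> nat \<Rightarrow> nat list set" where
  "level D r = {u \<in> vertices D. length u = r}"

lemma level_Suc: "level D (Suc r) = (\<lambda>(u, x). u @ [x]) ` (level D r \<times> {..<D r})"
proof (intro set_eqI iffI)
  fix v assume "v \<in> level D (Suc r)"
  then have v: "v \<in> vertices D" "length v = Suc r" by (auto simp: level_def)
  then obtain u x where ux: "v = u @ [x]" by (metis length_Suc_conv_rev)
  then show "v \<in> (\<lambda>(u, x). u @ [x]) ` (level D r \<times> {..<D r})"
    using v append_in_vertices_iff[of u "[x]"]
    by (auto simp: level_def vertices_def offset_def intro!: image_eqI[of _ _ "(u, x)"])
next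
  fix v assume "v \<in> (\<lambda>(u, x). u @ [x]) ` (level D r \<times> {..<D r})"
  then obtain u x where "v = u @ [x]" "u \<in> vertices D" "length u = r" "x < D r"
    by (auto simp: level_def)
  moreover from this have "[x] \<in> vertices (offset (length u) D)"
    by (simp add: vertices_def offset_def)
  ultimately show "v \<in> level D (Suc r)"
    by (simp add: level_def append_in_vertices_iff)
qed

lemma card_level: "card (level D r) = (\<Prod>t<r. D t)" and finite_level: "finite (level D r)"
proof -
  have "card (level D r) = (\<Prod>t<r. D t) \<and> finite (level D r)"
  proof (induction r)
    case 0
    have "level D 0 = {[]}" by (auto simp: level_def)
    then show ?case by simp
  next
    case (Suc r)
    have "inj_on (\<lambda>(u, x). u @ [x]) (level D r \<times> {..<D r})"
      by (auto simp: inj_on_def)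
    then show ?case
      unfolding level_Suc using Suc by (simp add: card_image card_cartesian_product)
  qed
  then show "card (level D r) = (\<Prod>t<r. D t)" "finite (level D r)" by auto
qed

definition descendants_upto :: "(nat \<Rightarrow> nat) \<Rightarrow> nat \<Rightarrow> nat list set" where
  "descendants_upto D r = {u \<in> vertices D. 1 \<le> length u \<and> length u \<le> r}"

lemma finite_descendants_upto: "finite (descendants_upto D r)"
  by (rule finite_subset[OF _ finite_vertices_upto[of D r]]) (auto simp: descendants_upto_def)

lemma card_descendants_upto: "card (descendants_upto D r) = (\<Sum>l=1..r. \<Prod>t<l. D t)"
proof -
  have "descendants_upto D r = (\<Union>l\<in>{1..r}. level D l)"
    by (auto simp: descendants_upto_def level_def)
  also have "card \<dots> = (\<Sum>l\<in>{1..r}. card (level D l))"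
    by (rule card_UN_disjoint) (simp_all add: finite_level, auto simp: level_def)
  finally show ?thesis by (simp add: card_level)
qed

fun exact_chain :: "nat \<Rightarrow> (nat \<Rightarrow> nat) \<Rightarrow> (nat list \<Rightarrow> nat) \<Rightarrow> bool" where
  "exact_chain 0 D \<omega> = True"
| "exact_chain (Suc n) D \<omega> \<longleftrightarrow> 1 \<le> \<omega> [] \<and>
     (\<exists>u\<in>vertices D. length u = \<omega> [] \<and> exact_chain n (offset (\<omega> []) D) (subconfig u \<omega>))"

lemma exact_chain_reaches:
  "exact_chain n D \<omega> \<Longrightarrow> \<exists>v. reached D \<omega> v \<and> n \<le> length v"
proof (induction n arbitrary: D \<omega>)
  case 0
  then show ?case using reached.root by blast
next
  case (Suc n)
  then obtain u where u: "u \<in> vertices D" "length u = \<omega> []" "1 \<le> \<omega> []"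
      "exact_chain n (offset (length u) D) (subconfig u \<omega>)"
    by auto
  from Suc.IH[OF u(4)] obtain v where v:
      "reached (offset (length u) D) (subconfig u \<omega>) v" "n \<le> length v"
    by blast
  have "reached D \<omega> u"
    using u reached.step[OF reached.root] by (simp add: cone_at_Nil)
  then have "reached D \<omega> (u @ v)" using reached_append v(1) by blast
  then show ?case using v u by (intro exI[of _ "u @ v"]) auto
qed

lemma exact_chain_Suc_imp: "exact_chain (Suc n) D \<omega> \<Longrightarrow> exact_chain n D \<omega>"
proof (induction n arbitrary: D \<omega>)
  case (Suc n)
  then obtain u where "1 \<le> \<omega> []" "u \<in> vertices D" "length u = \<omega> []"
      "exact_chain (Suc n) (offset (\<omega> []) D) (subconfig u \<omega>)"
    by (simp only: exact_chain.simps(2)[of "Suc n"]) blast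
  with Suc.IH show ?case
    by (simp only: exact_chain.simps(2)[of n]) blast
qed simp

section \<open>Independent radii\<close>

definition determined_by :: "nat list set \<Rightarrow> (nat list \<Rightarrow> nat) set \<Rightarrow> bool" where
  "determined_by K Y \<longleftrightarrow>
     (\<forall>\<omega> \<omega>'. (\<forall>j\<in>K. \<omega> j = \<omega>' j) \<longrightarrow> \<omega> \<in> Y \<longrightarrow> \<omega>' \<in> Y)"

lemma determined_by_radius: "determined_by {v} {\<omega>. \<omega> v = r}"
  by (simp add: determined_by_def)

lemma determined_by_subconfig_vimage: "determined_by (range ((@) u)) (subconfig u -` E)"
  unfolding determined_by_def
proof (intro allI impI)
  fix \<omega> \<omega>' assume "\<forall>j\<in>range ((@) u). \<omega> j = \<omega>' j" "\<omega> \<in> subconfig u -` E"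
  moreover from this have "subconfig u \<omega> = subconfig u \<omega>'"
    by (simp add: subconfig_def fun_eq_iff)
  ultimately show "\<omega>' \<in> subconfig u -` E" by simp
qed

lemma determined_by_mono: "determined_by K Y \<Longrightarrow> K \<subseteq> K' \<Longrightarrow> determined_by K' Y"
  by (auto simp: determined_by_def)

lemma determined_by_UN:
  "(\<And>i. i \<in> I \<Longrightarrow> determined_by K (Y i)) \<Longrightarrow> determined_by K (\<Union>i\<in>I. Y i)"
  by (auto simp: determined_by_def)

lemma disjoint_family_on_subtrees:
  assumes "1 \<le> r"
  shows "disjoint_family_on (\<lambda>v. if v = [] then {[]} else range ((@) v)) (insert [] (level D r))"
  using assms by (auto simp: disjoint_family_on_def level_def append_eq_append_conv)

lemma pmf_sums_one: "(\<lambda>r. pmf p r) sums (1 :: real)" for p :: "nat pmf"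
proof -
  have "(\<lambda>r. measure p {r}) sums measure p (\<Union>r. {r})"
    by (rule measure_pmf.finite_measure_UNION) (auto simp: disjoint_family_on_def)
  then show ?thesis by (simp add: measure_pmf_single)
qed

locale radii =
  fixes p :: "nat pmf"
begin

abbreviation M where "M \<equiv> perc_space p"

sublocale P: prob_space M
  unfolding perc_space_def by (rule prob_space_PiM) (rule prob_space_measure_pmf)

lemma space_M [simp]: "space M = UNIV"
  by (simp add: perc_space_def space_PiM)

lemma measurable_radius_pmf: "(\<lambda>\<omega>. \<omega> v) \<in> measurable M (measure_pmf p)"
  unfolding perc_space_def by (rule measurable_component_singleton) simp

lemma measurable_radius [measurable]: "(\<lambda>\<omega>. \<omega> v) \<in> measurable M (count_space UNIV)"
  using measurable_radius_pmf by (simp add: measurable_cong_sets[OF refl sets_measure_pmf_count_space])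

lemma measurable_subconfig [measurable]: "subconfig u \<in> measurable M M"
proof -
  have "(\<lambda>\<omega> w. \<omega> (u @ w)) \<in> measurable M (PiM UNIV (\<lambda>_. measure_pmf p))"
  proof (rule measurable_PiM_single')
    show "(\<lambda>\<omega>. \<omega> (u @ w)) \<in> measurable M (measure_pmf p)" for w
      by (rule measurable_radius_pmf)
  qed (simp add: perc_space_def)
  then show ?thesis by (simp add: perc_space_def subconfig_def[abs_def])
qed

lemma sets_vimage_subconfig [measurable]: "E \<in> sets M \<Longrightarrow> subconfig u -` E \<in> sets M"
  using measurable_sets[OF measurable_subconfig] by (metis Int_UNIV_right space_M)

lemma distr_subconfig: "distr M M (subconfig u) = M"
proof -
  have "distr (PiM UNIV (\<lambda>_. measure_pmf p)) (PiM UNIV (\<lambda>_. measure_pmf p))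
          (\<lambda>\<omega>. \<lambda>n\<in>UNIV. \<omega> (u @ n)) = PiM UNIV (\<lambda>_. measure_pmf p)"
    using distr_PiM_reindex[of UNIV "\<lambda>_. measure_pmf p" "(@) u" UNIV]
    by (simp add: prob_space_measure_pmf inj_def)
  moreover have "(\<lambda>\<omega>. \<lambda>n\<in>UNIV. \<omega> (u @ n)) = subconfig u"
    by (simp add: fun_eq_iff subconfig_def)
  ultimately show ?thesis by (simp add: perc_space_def)
qed

lemma measure_vimage_subconfig:
  assumes "E \<in> sets M"
  shows "measure M (subconfig u -` E) = measure M E"
proof -
  have "measure M E = measure (distr M M (subconfig u)) E" by (simp add: distr_subconfig)
  also have "\<dots> = measure M (subconfig u -` E)"
    using assms by (subst measure_distr) auto
  finally show ?thesis by simp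
qed

lemma measure_radius_eq: "measure M {\<omega>. \<omega> v = r} = pmf p r"
proof -
  have "distr M (measure_pmf p) (\<lambda>\<omega>. \<omega> v) = measure_pmf p"
    unfolding perc_space_def by (rule distr_PiM_component) (auto intro: prob_space_measure_pmf)
  then have "pmf p r = measure (distr M (measure_pmf p) (\<lambda>\<omega>. \<omega> v)) {r}"
    by (simp add: measure_pmf_single)
  also have "\<dots> = measure M {\<omega>. \<omega> v = r}"
    by (subst measure_distr[OF measurable_radius_pmf]) (auto simp: vimage_def)
  finally show ?thesis by simp
qed

lemma sets_radius_eq [measurable]: "{\<omega>. \<omega> v = r} \<in> sets M"
  using measurable_sets[OF measurable_radius, of "{r}"] by (simp add: vimage_def)

lemma pred_cone_at [measurable]: "Measurable.pred M (\<lambda>\<omega>. v \<in> cone_at D \<omega> u)"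
  unfolding cone_at_def by measurable

lemma pred_generation [measurable]: "Measurable.pred M (\<lambda>\<omega>. v \<in> generation D \<omega> n)"
proof (induction n arbitrary: v)
  case (Suc n)
  have "(\<lambda>\<omega>. v \<in> generation D \<omega> (Suc n)) =
      (\<lambda>\<omega>. \<exists>u. u \<in> generation D \<omega> n \<and> v \<in> cone_at D \<omega> u)"
    by auto
  also have "Measurable.pred M \<dots>"
    using Suc.IH by measurable
  finally show ?case .
qed simp

lemma pred_reached [measurable]: "Measurable.pred M (\<lambda>\<omega>. reached D \<omega> v)"
  unfolding reached_iff_generation by measurable

lemma pred_percolates [measurable]: "Measurable.pred M (percolates D)"
  unfolding percolates_iff_unbounded by measurable

lemma sets_percolates [measurable]: "{\<omega>. percolates D \<omega>} \<in> sets M"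
  using pred_percolates[of D] by (simp add: pred_def)

lemma pred_exact_chain [measurable]: "Measurable.pred M (exact_chain n D)"
proof (induction n arbitrary: D)
  case 0
  have "exact_chain 0 D = (\<lambda>_. True)" by (simp add: fun_eq_iff)
  then show ?case by simp
next
  case (Suc n)
  have "exact_chain (Suc n) D = (\<lambda>\<omega>. \<exists>r. \<omega> [] = r \<and> 1 \<le> r \<and>
          (\<exists>u. u \<in> vertices D \<and> length u = r \<and> exact_chain n (offset r D) (subconfig u \<omega>)))"
    by (auto simp: fun_eq_iff)
  also have "Measurable.pred M \<dots>"
  proof -
    have "Measurable.pred M (\<lambda>\<omega>. exact_chain n (offset r D) (subconfig u \<omega>))" for r u
      using Suc.IH measurable_compose[OF measurable_subconfig] by blast
    then show ?thesis by measurable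
  qed
  finally show ?case .
qed

lemma sets_not_exact_chain [measurable]: "{\<omega>. \<not> exact_chain n D \<omega>} \<in> sets M"
proof -
  have "Measurable.pred M (\<lambda>\<omega>. \<not> exact_chain n D \<omega>)" by measurable
  then show ?thesis by (simp add: pred_def)
qed

lemma indep_vars_radii: "P.indep_vars (\<lambda>_. measure_pmf p) (\<lambda>i \<omega>. \<omega> i) UNIV"
proof (subst P.indep_vars_iff_distr_eq_PiM)
  show "UNIV \<noteq> {}" by simp
  show "P.random_variable (measure_pmf p) (\<lambda>\<omega>. \<omega> i)" for i
    by (rule measurable_radius_pmf)
  have "distr M (measure_pmf p) (\<lambda>\<omega>. \<omega> i) = measure_pmf p" for i
    unfolding perc_space_def by (rule distr_PiM_component) (auto intro: prob_space_measure_pmf)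
  moreover have "restrict x UNIV = x" for x :: "nat list \<Rightarrow> nat"
    by (simp add: fun_eq_iff)
  ultimately show "distr M (Pi\<^sub>M UNIV (\<lambda>_. measure_pmf p)) (\<lambda>x. \<lambda>i\<in>UNIV. x i) =
      Pi\<^sub>M UNIV (\<lambda>i. distr M (measure_pmf p) (\<lambda>\<omega>. \<omega> i))"
    by (simp add: perc_space_def)
qed

lemma measurable_zero_extension:
  "(\<lambda>f v. if v \<in> K then f v else 0) \<in> measurable (PiM K (\<lambda>_. measure_pmf p)) M"
  unfolding perc_space_def
proof (rule measurable_PiM_single')
  fix v
  show "(\<lambda>f. if v \<in> K then f v else 0) \<in> measurable (PiM K (\<lambda>_. measure_pmf p)) (measure_pmf p)"
  proof (cases "v \<in> K")
    case True
    then have "(\<lambda>f. f v) \<in> measurable (PiM K (\<lambda>_. measure_pmf p)) (measure_pmf p)"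
      by (rule measurable_component_singleton)
    then show ?thesis using True by simp
  qed simp
qed simp

text \<open>The witness is the preimage of \<open>Y\<close> under extension by \<open>0\<close> outside \<open>K\<close>.\<close>
lemma determined_by_restrict_vimage:
  assumes "determined_by K Y" and "Y \<in> sets M"
  obtains B where "B \<in> sets (PiM K (\<lambda>_. measure_pmf p))"
    and "Y = (\<lambda>\<omega>. restrict \<omega> K) -` B \<inter> space M"
proof
  let ?ext = "\<lambda>f v. if v \<in> K then f v else 0"
  let ?B = "?ext -` Y \<inter> space (PiM K (\<lambda>_. measure_pmf p))"
  show "?B \<in> sets (PiM K (\<lambda>_. measure_pmf p))"
    using measurable_sets[OF measurable_zero_extension assms(2)] .
  have det: "\<And>\<omega> \<omega>'. \<forall>j\<in>K. \<omega> j = \<omega>' j \<Longrightarrow> \<omega> \<in> Y \<Longrightarrow> \<omega>' \<in> Y"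
    using assms(1) by (simp add: determined_by_def)
  have "\<omega> \<in> Y \<longleftrightarrow> ?ext (restrict \<omega> K) \<in> Y" for \<omega>
    using det[of \<omega> "?ext (restrict \<omega> K)"] det[of "?ext (restrict \<omega> K)" \<omega>] by auto
  then have "Y = {\<omega>. ?ext (restrict \<omega> K) \<in> Y}" by (simp add: set_eq_iff)
  also have "\<dots> = (\<lambda>\<omega>. restrict \<omega> K) -` ?B \<inter> space M"
    by (auto simp: space_PiM simp del: restrict_apply)
  finally show "Y = (\<lambda>\<omega>. restrict \<omega> K) -` ?B \<inter> space M" .
qed

lemma measure_INT_determined:
  assumes "finite I" and "I \<noteq> {}" and "disjoint_family_on K I"
    and "\<And>i. i \<in> I \<Longrightarrow> Y i \<in> sets M" and "\<And>i. i \<in> I \<Longrightarrow> determined_by (K i) (Y i)"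
  shows "measure M (\<Inter>i\<in>I. Y i) = (\<Prod>i\<in>I. measure M (Y i))"
proof -
  let ?X = "\<lambda>i \<omega>. restrict \<omega> (K i)"
  have "\<forall>i\<in>I. \<exists>B. B \<in> sets (PiM (K i) (\<lambda>_. measure_pmf p)) \<and> Y i = ?X i -` B \<inter> space M"
  proof
    fix i assume "i \<in> I"
    show "\<exists>B. B \<in> sets (PiM (K i) (\<lambda>_. measure_pmf p)) \<and> Y i = ?X i -` B \<inter> space M"
      by (rule determined_by_restrict_vimage[OF assms(5,4)[OF \<open>i \<in> I\<close>]]) blast
  qed
  from bchoice[OF this] obtain B
    where "\<forall>i\<in>I. B i \<in> sets (PiM (K i) (\<lambda>_. measure_pmf p)) \<and> Y i = ?X i -` B i \<inter> space M" ..
  then have B: "\<And>i. i \<in> I \<Longrightarrow> B i \<in> sets (PiM (K i) (\<lambda>_. measure_pmf p))"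
    and Y: "\<And>i. i \<in> I \<Longrightarrow> Y i = ?X i -` B i \<inter> space M"
    by simp_all
  have indep: "P.indep_vars (\<lambda>i. PiM (K i) (\<lambda>_. measure_pmf p)) ?X I"
    by (rule P.indep_vars_restrict[OF indep_vars_radii _ assms(3)]) simp
  have "measure M (\<Inter>i\<in>I. Y i) = measure M (\<Inter>i\<in>I. ?X i -` B i \<inter> space M)"
    using Y by (intro arg_cong[where f="measure M"] INF_cong) auto
  also have "\<dots> = (\<Prod>i\<in>I. measure M (?X i -` B i \<inter> space M))"
    by (rule P.indep_varsD_finite[OF indep assms(2,1) B])
  also have "\<dots> = (\<Prod>i\<in>I. measure M (Y i))"
    using Y by (intro prod.cong) auto
  finally show ?thesis .
qed

lemma measure_Int_determined:
  assumes "A \<in> sets M" "B \<in> sets M" "determined_by Ka A" "determined_by Kb B" "Ka \<inter> Kb = {}"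
  shows "measure M (A \<inter> B) = measure M A * measure M B"
proof -
  have "measure M (\<Inter>b\<in>UNIV. if b then A else B) = (\<Prod>b\<in>UNIV. measure M (if b then A else B))"
    using assms
    by (intro measure_INT_determined[where K="\<lambda>b. if b then Ka else Kb"])
       (auto simp: disjoint_family_on_def)
  then show ?thesis by (simp add: UNIV_bool Int_commute)
qed

end

section \<open>Survival\<close>

context radii
begin

lemma measure_root_and_level:
  assumes "E \<in> sets M" and "1 \<le> r"
  shows "measure M ({\<omega>. \<omega> [] = r} \<inter> (\<Inter>u\<in>level D r. subconfig u -` E)) =
    pmf p r * measure M E ^ card (level D r)"
proof -
  define Y where "Y v = (if v = [] then {\<omega>. \<omega> [] = r} else subconfig v -` E)" for v
  have Nil: "[] \<notin> level D r" using assms(2) by (auto simp: level_def)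
  have "measure M (\<Inter>v\<in>insert [] (level D r). Y v) = (\<Prod>v\<in>insert [] (level D r). measure M (Y v))"
    using assms finite_level disjoint_family_on_subtrees
    by (intro measure_INT_determined)
       (auto simp: Y_def determined_by_radius determined_by_subconfig_vimage sets_radius_eq)
  moreover have "(\<Inter>v\<in>insert [] (level D r). Y v) =
      {\<omega>. \<omega> [] = r} \<inter> (\<Inter>u\<in>level D r. subconfig u -` E)"
    using Nil by (auto simp: Y_def)
  moreover have "(\<Prod>v\<in>level D r. measure M (Y v)) = (\<Prod>v\<in>level D r. measure M E)"
    using Nil assms(1) by (intro prod.cong) (auto simp: Y_def measure_vimage_subconfig)
  ultimately show ?thesis
    using Nil finite_level by (simp add: Y_def measure_radius_eq)
qed

lemma measure_not_exact_chain_Suc_sums: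
  "(\<lambda>r. if r = 0 then pmf p 0 else measure M ({\<omega>. \<omega> [] = r} \<inter>
          (\<Inter>u\<in>level D r. subconfig u -` {\<omega>. \<not> exact_chain n (offset r D) \<omega>})))
     sums measure M {\<omega>. \<not> exact_chain (Suc n) D \<omega>}"
proof -
  define A where "A r = {\<omega>. \<omega> [] = r \<and>
      (r = 0 \<or> (\<forall>u\<in>level D r. \<not> exact_chain n (offset r D) (subconfig u \<omega>)))}" for r
  have "A r \<in> sets M" for r
  proof -
    have "Measurable.pred M (\<lambda>\<omega>. \<omega> [] = r \<and>
        (r = 0 \<or> (\<forall>u\<in>level D r. \<not> exact_chain n (offset r D) (subconfig u \<omega>))))"
      by measurable
    then show ?thesis by (simp add: pred_def A_def)
  qed
  then have "(\<lambda>r. measure M (A r)) sums measure M (\<Union>r. A r)"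
    by (intro P.finite_measure_UNION) (auto simp: disjoint_family_on_def A_def)
  moreover have "(\<Union>r. A r) = {\<omega>. \<not> exact_chain (Suc n) D \<omega>}"
    by (auto simp: A_def level_def)
  moreover have "A r = (if r = 0 then {\<omega>. \<omega> [] = 0} else {\<omega>. \<omega> [] = r} \<inter>
          (\<Inter>u\<in>level D r. subconfig u -` {\<omega>. \<not> exact_chain n (offset r D) \<omega>}))" for r
    by (auto simp: A_def)
  ultimately show ?thesis
    by (simp add: measure_radius_eq if_distrib[of "measure M"] cong: if_cong)
qed

lemma measure_not_exact_chain_le:
  fixes N :: "nat \<Rightarrow> nat" and z :: real
  assumes N: "\<And>m r. 1 \<le> r \<Longrightarrow> N r \<le> (\<Prod>t<r. D (t + m))"
    and z: "0 \<le> z" "z \<le> 1"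
    and fixpoint: "(\<Sum>r. pmf p r * (if r = 0 then 1 else z ^ N r)) \<le> z"
  shows "measure M {\<omega>. \<not> exact_chain n (offset m D) \<omega>} \<le> z"
proof (induction n arbitrary: m)
  case 0
  then show ?case using z by simp
next
  case (Suc n)
  define g where "g r = pmf p r * (if r = 0 then 1 else z ^ N r)" for r
  have g: "summable g"
    using z by (intro summable_comparison_test[OF _ sums_summable[OF pmf_sums_one]])
      (auto simp: g_def power_le_one mult_left_le)
  define f where "f r = (if r = 0 then pmf p 0 else measure M ({\<omega>. \<omega> [] = r} \<inter>
      (\<Inter>u\<in>level (offset m D) r. subconfig u -` {\<omega>. \<not> exact_chain n (offset r (offset m D)) \<omega>})))"
    for r
  have fg: "f r \<le> g r" for r
  proof (cases "r = 0")
    case False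
    define e where "e = measure M {\<omega>. \<not> exact_chain n (offset (r + m) D) \<omega>}"
    have e: "0 \<le> e" "e \<le> z" using Suc.IH[of "r + m"] by (auto simp: e_def)
    have card: "N r \<le> card (level (offset m D) r)"
      using N[of r m] False by (simp add: card_level offset_def)
    have "f r = measure M ({\<omega>. \<omega> [] = r} \<inter>
        (\<Inter>u\<in>level (offset m D) r. subconfig u -` {\<omega>. \<not> exact_chain n (offset (r + m) D) \<omega>}))"
      using False by (simp only: f_def offset_offset if_False)
    also have "\<dots> = pmf p r * e ^ card (level (offset m D) r)"
      unfolding e_def using False by (intro measure_root_and_level sets_not_exact_chain) simp
    also have "\<dots> \<le> pmf p r * z ^ card (level (offset m D) r)"
      using e by (intro mult_left_mono power_mono) auto
    also have "\<dots> \<le> pmf p r * z ^ N r"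
      using z card by (intro mult_left_mono power_decreasing) auto
    finally show ?thesis using False by (simp add: g_def)
  qed (simp add: f_def g_def)
  have "f sums measure M {\<omega>. \<not> exact_chain (Suc n) (offset m D) \<omega>}"
    unfolding f_def by (rule measure_not_exact_chain_Suc_sums)
  from sums_le[OF fg this summable_sums[OF g]]
  have "measure M {\<omega>. \<not> exact_chain (Suc n) (offset m D) \<omega>} \<le> suminf g" .
  also have "\<dots> \<le> z" using fixpoint by (simp add: g_def[abs_def])
  finally show ?case .
qed

lemma survival_lower_bound:
  fixes N :: "nat \<Rightarrow> nat" and z :: real
  assumes "\<And>m r. 1 \<le> r \<Longrightarrow> N r \<le> (\<Prod>t<r. D (t + m))"
    and "0 \<le> z" "z \<le> 1"
    and "(\<Sum>r. pmf p r * (if r = 0 then 1 else z ^ N r)) \<le> z"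
  shows "1 - z \<le> measure M {\<omega>. percolates D \<omega>}"
proof -
  have sets: "{\<omega>. exact_chain n D \<omega>} \<in> sets M" for n
    using pred_exact_chain[of n D] by (simp add: pred_def)
  have "1 - z \<le> measure M {\<omega>. exact_chain n D \<omega>}" for n
    using measure_not_exact_chain_le[OF assms, of n 0] P.prob_compl[OF sets[of n]]
    by (simp add: set_diff_eq)
  moreover have "decseq (\<lambda>n. {\<omega>. exact_chain n D \<omega>})"
    by (rule decseq_SucI) (auto simp del: exact_chain.simps intro: exact_chain_Suc_imp)
  then have "(\<lambda>n. measure M {\<omega>. exact_chain n D \<omega>}) \<longlonglongrightarrow>
      measure M (\<Inter>n. {\<omega>. exact_chain n D \<omega>})"
    using sets by (intro P.finite_Lim_measure_decseq) auto
  ultimately have "1 - z \<le> measure M (\<Inter>n. {\<omega>. exact_chain n D \<omega>})"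
    by (intro LIMSEQ_le_const) auto
  also have "\<dots> \<le> measure M {\<omega>. percolates D \<omega>}"
    using exact_chain_reaches by (intro P.finite_measure_mono sets_percolates)
      (auto simp: percolates_iff_unbounded)
  finally show ?thesis .
qed

end

section \<open>Extinction\<close>

definition percolates_below :: "(nat \<Rightarrow> nat) \<Rightarrow> nat list \<Rightarrow> (nat list \<Rightarrow> nat) set" where
  "percolates_below D u = subconfig u -` {\<omega>. percolates (offset (length u) D) \<omega>}"

lemma determined_by_percolates_below: "determined_by (range ((@) u)) (percolates_below D u)"
  unfolding percolates_below_def by (rule determined_by_subconfig_vimage)

lemma percolates_imp_percolates_below:
  assumes "percolates D \<omega>"
  shows "1 \<le> \<omega> [] \<and> (\<exists>u\<in>descendants_upto D (\<omega> []). \<omega> \<in> percolates_below D u)"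
proof (rule ccontr)
  assume "\<not> ?thesis"
  then have fin: "finite {w. reached (offset (length u) D) (subconfig u \<omega>) w}"
    if "u \<in> cone_at D \<omega> []" "u \<noteq> []" for u
    using that by (auto simp: descendants_upto_def cone_at_Nil percolates_below_def
        percolates_def Suc_le_eq)
  have "{v. reached D \<omega> v} \<subseteq> cone_at D \<omega> [] \<union>
      (\<Union>u\<in>cone_at D \<omega> [] - {[]}. (@) u ` {w. reached (offset (length u) D) (subconfig u \<omega>) w})"
    using reached_through_root_cone[of D \<omega>] by blast
  moreover have "finite (cone_at D \<omega> [])"
    unfolding cone_at_Nil by (rule finite_vertices_upto)
  ultimately have "finite {v. reached D \<omega> v}"
    using fin by (auto intro: finite_subset)
  then show False using assms by (simp add: percolates_def)
qed

context radii
begin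

lemma sets_percolates_below [measurable]: "percolates_below D u \<in> sets M"
  unfolding percolates_below_def by (intro sets_vimage_subconfig sets_percolates)

lemma measure_percolates_below:
  "measure M (percolates_below D u) = measure M {\<omega>. percolates (offset (length u) D) \<omega>}"
  unfolding percolates_below_def by (intro measure_vimage_subconfig sets_percolates)

lemma measure_percolates_below_upto_le:
  assumes D0: "2 \<le> D 0" and r: "1 \<le> r"
    and x: "\<And>l. measure M {\<omega>. percolates (offset l D) \<omega>} \<le> x"
  defines "y \<equiv> measure M {\<omega>. percolates (offset 1 D) \<omega>}"
  shows "measure M (\<Union>u\<in>descendants_upto D r. percolates_below D u) \<le>
    2 * y - y\<^sup>2 + x * (real (card (descendants_upto D r)) - 2)"
proof -
  let ?A = "percolates_below D" and ?C = "descendants_upto D r"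
  have C01: "{[0], [1]} \<subseteq> ?C"
    using D0 r by (auto simp: descendants_upto_def vertices_def)
  have "(\<Union>u\<in>?C. ?A u) = (?A [0] \<union> ?A [1]) \<union> (\<Union>u\<in>?C - {[0], [1]}. ?A u)"
    using C01 by auto
  then have "measure M (\<Union>u\<in>?C. ?A u) \<le>
      measure M (?A [0] \<union> ?A [1]) + measure M (\<Union>u\<in>?C - {[0], [1]}. ?A u)"
    by (simp add: measure_Un_le)
  also have "measure M (?A [0] \<union> ?A [1]) = 2 * y - y\<^sup>2"
  proof -
    have "measure M (?A [0] \<inter> ?A [1]) = measure M (?A [0]) * measure M (?A [1])"
      by (rule measure_Int_determined[OF sets_percolates_below sets_percolates_below
          determined_by_percolates_below determined_by_percolates_below]) auto
    then show ?thesis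
      by (simp add: measure_Un3 P.fmeasurable_eq_sets measure_percolates_below y_def power2_eq_square)
  qed
  also have "measure M (\<Union>u\<in>?C - {[0], [1]}. ?A u) \<le> (\<Sum>u\<in>?C - {[0], [1]}. measure M (?A u))"
    by (rule measure_UNION_le) (auto simp: finite_descendants_upto)
  also have "\<dots> \<le> (\<Sum>u\<in>?C - {[0], [1]}. x)"
    by (rule sum_mono) (simp add: measure_percolates_below x)
  also have "\<dots> = x * (real (card ?C) - 2)"
    using C01 finite_descendants_upto card_mono[OF finite_descendants_upto C01]
    by (simp add: card_Diff_subset of_nat_diff)
  finally show ?thesis by simp
qed

lemma measure_root_radius_percolates_below_le:
  assumes D0: "2 \<le> D 0" and r: "1 \<le> r"
    and x: "\<And>l. measure M {\<omega>. percolates (offset l D) \<omega>} \<le> x"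
  defines "y \<equiv> measure M {\<omega>. percolates (offset 1 D) \<omega>}"
  shows "measure M ({\<omega>. \<omega> [] = r} \<inter> (\<Union>u\<in>descendants_upto D r. percolates_below D u)) \<le>
    pmf p r * (2 * y - y\<^sup>2 + x * (real (card (descendants_upto D r)) - 2))"
proof -
  let ?U = "\<Union>u\<in>descendants_upto D r. percolates_below D u"
  have "determined_by (- {[]}) ?U"
  proof (rule determined_by_UN)
    fix u assume "u \<in> descendants_upto D r"
    then have "range ((@) u) \<subseteq> - {[]}" by (auto simp: descendants_upto_def)
    then show "determined_by (- {[]}) (percolates_below D u)"
      by (rule determined_by_mono[OF determined_by_percolates_below])
  qed
  then have "measure M ({\<omega>. \<omega> [] = r} \<inter> ?U) = pmf p r * measure M ?U"
    using finite_descendants_upto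
    by (subst measure_Int_determined[OF _ _ determined_by_radius])
       (auto simp: measure_radius_eq sets_radius_eq)
  also have "\<dots> \<le> pmf p r * (2 * y - y\<^sup>2 + x * (real (card (descendants_upto D r)) - 2))"
    unfolding y_def by (intro mult_left_mono measure_percolates_below_upto_le D0 r x) simp
  finally show ?thesis .
qed

text \<open>The two children of the root are handled by inclusion-exclusion, all other vertices of the
  root cone by the union bound; this is what leaves the term \<open>- y\<^sup>2\<close>.\<close>
lemma survival_recursion_bound:
  fixes S :: "nat \<Rightarrow> real"
  assumes D0: "2 \<le> D 0"
    and x: "\<And>l. measure M {\<omega>. percolates (offset l D) \<omega>} \<le> x"
    and S: "\<And>r. 1 \<le> r \<Longrightarrow> real (card (descendants_upto D r)) \<le> S r"
    and ES: "(\<lambda>r. pmf p r * S r) sums E" and E: "E \<le> 1" and S0: "0 \<le> S 0"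
  defines "y \<equiv> measure M {\<omega>. percolates (offset 1 D) \<omega>}"
  shows "measure M {\<omega>. percolates D \<omega>} \<le> (1 - pmf p 0) * (2 * y - y\<^sup>2 - 2 * x) + x"
proof -
  define c where "c = 2 * y - y\<^sup>2 - 2 * x"
  define X where "X r = (if r = 0 then {} else
    {\<omega>. \<omega> [] = r} \<inter> (\<Union>u\<in>descendants_upto D r. percolates_below D u))" for r
  define g where "g r = pmf p r * c + x * (pmf p r * S r)" for r
  have x0: "0 \<le> x" using measure_nonneg x by (rule order_trans)
  have X: "X r \<in> sets M" for r
    using finite_descendants_upto by (auto simp: X_def sets_radius_eq)
  have "{\<omega>. percolates D \<omega>} \<subseteq> (\<Union>r. X r)"
    by (auto simp: X_def dest!: percolates_imp_percolates_below)
  then have "measure M {\<omega>. percolates D \<omega>} \<le> measure M (\<Union>r. X r)"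
    using X by (intro P.finite_measure_mono) auto
  also have "\<dots> \<le> c + x * E - g 0"
  proof (rule sums_le)
    show "(\<lambda>r. measure M (X r)) sums measure M (\<Union>r. X r)"
      by (rule P.finite_measure_UNION) (use X in blast, auto simp: disjoint_family_on_def X_def)
    have "g sums (c + x * E)"
      unfolding g_def[abs_def] using sums_add[OF sums_mult2[OF pmf_sums_one] sums_mult[OF ES]] by simp
    then show "(\<lambda>r. g r - (if r = 0 then g 0 else 0)) sums (c + x * E - g 0)"
      using sums_single[of 0 "\<lambda>_. g 0"] by (intro sums_diff) simp_all
    show "measure M (X r) \<le> g r - (if r = 0 then g 0 else 0)" for r
    proof (cases "r = 0")
      case False
      then have "measure M (X r) \<le>
          pmf p r * (2 * y - y\<^sup>2 + x * (real (card (descendants_upto D r)) - 2))"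
        using measure_root_radius_percolates_below_le[OF D0 _ x, of r] False
        unfolding X_def y_def by simp
      also have "\<dots> \<le> pmf p r * (c + x * S r)"
      proof -
        have "x * (real (card (descendants_upto D r)) - 2) \<le> x * (S r - 2)"
          using S[of r] False x0 by (intro mult_left_mono) auto
        then show ?thesis by (intro mult_left_mono) (auto simp: c_def algebra_simps)
      qed
      finally show ?thesis using False by (simp add: g_def algebra_simps)
    qed (simp add: X_def)
  qed
  also have "\<dots> \<le> (1 - pmf p 0) * c + x"
    using mult_left_le[OF E x0] x0 S0 by (simp add: g_def algebra_simps add_increasing2)
  finally show ?thesis by (simp add: c_def)
qed

text \<open>The survival probability \<open>x\<close> is maximal at some depth \<open>m < k\<close>; there the recursion bound
  forces \<open>2 y - y\<^sup>2 \<ge> 2 x \<ge> 2 y\<close> for the survival probability \<open>y\<close> at depth \<open>m + 1\<close>,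
  hence \<open>y = 0\<close> and \<open>x = 0\<close>.\<close>
lemma extinction_periodic:
  fixes S :: "nat \<Rightarrow> real"
  assumes k: "1 \<le> k" and periodic: "\<And>m. offset m D = offset (m mod k) D" and D2: "\<And>t. 2 \<le> D t"
    and S: "\<And>m r. 1 \<le> r \<Longrightarrow> (\<Sum>l=1..r. real (\<Prod>t<l. D (t + m))) \<le> S r"
    and ES: "(\<lambda>r. pmf p r * S r) sums E" and E: "E \<le> 1" and S0: "0 \<le> S 0"
    and p0: "pmf p 0 < 1"
  shows "measure M {\<omega>. percolates D \<omega>} = 0"
proof -
  define F where "F l = measure M {\<omega>. percolates (offset l D) \<omega>}" for l
  define x where "x = Max (F ` {..<k})"
  have Fx: "F l \<le> x" for l
  proof -
    have "F l = F (l mod k)" by (simp add: F_def periodic[of l])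
    also have "\<dots> \<le> x" unfolding x_def using k by (intro Max_ge) auto
    finally show ?thesis .
  qed
  have "x \<in> F ` {..<k}"
    unfolding x_def using k by (intro Max_in) (auto simp: lessThan_empty_iff)
  then obtain m where "F m = x" by blast
  moreover have "F m \<le> (1 - pmf p 0) * (2 * F (m + 1) - (F (m + 1))\<^sup>2 - 2 * x) + x"
  proof -
    have "2 \<le> offset m D 0" using D2 by (simp add: offset_def)
    moreover have "measure M {\<omega>. percolates (offset l (offset m D)) \<omega>} \<le> x" for l
      using Fx[of "l + m"] by (simp add: F_def)
    moreover have "real (card (descendants_upto (offset m D) r)) \<le> S r" if "1 \<le> r" for r
      using S[OF that, of m] by (simp add: card_descendants_upto offset_def)
    ultimately have "measure M {\<omega>. percolates (offset m D) \<omega>} \<le> (1 - pmf p 0) *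
        (2 * measure M {\<omega>. percolates (offset 1 (offset m D)) \<omega>} -
          (measure M {\<omega>. percolates (offset 1 (offset m D)) \<omega>})\<^sup>2 - 2 * x) + x"
      by (rule survival_recursion_bound[OF _ _ _ ES E S0])
    then show ?thesis by (simp add: F_def add.commute)
  qed
  ultimately have "0 \<le> 2 * F (m + 1) - (F (m + 1))\<^sup>2 - 2 * x"
    using p0 by (simp add: zero_le_mult_iff)
  then have "(F (m + 1))\<^sup>2 \<le> 0" and "x \<le> F (m + 1) - (F (m + 1))\<^sup>2 / 2"
    using Fx[of "m + 1"] by linarith+
  then have "x \<le> 0" by simp
  then show ?thesis
    using Fx[of 0] by (intro antisym) (simp_all add: F_def)
qed

end

section \<open>Sums, products and a fixpoint of the generating function\<close>

lemma prod_prefix_le_sorted: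
  fixes xs :: "nat list"
  assumes "sorted xs" "Q \<subseteq> {..<length xs}" "card Q = b"
  shows "(\<Prod>j<b. real (xs ! j)) \<le> (\<Prod>q\<in>Q. real (xs ! q))"
  using assms(2,3)
proof (induction b arbitrary: Q)
  case 0
  then have "Q = {}" using finite_subset[OF _ finite_lessThan] by (metis card_0_eq)
  then show ?case by simp
next
  case (Suc b)
  have fQ: "finite Q" using Suc.prems(1) finite_subset by blast
  then have ne: "Q \<noteq> {}" using Suc.prems(2) by auto
  define q where "q = Max Q"
  have qQ: "q \<in> Q" using fQ ne by (simp add: q_def)
  have "Q \<subseteq> {..q}" using fQ by (auto simp: q_def)
  then have "card Q \<le> card {..q}" by (intro card_mono) auto
  then have bq: "b \<le> q" using Suc.prems(2) by simp
  have ql: "q < length xs" using qQ Suc.prems(1) by auto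
  have IH: "(\<Prod>j<b. real (xs ! j)) \<le> (\<Prod>q\<in>Q - {q}. real (xs ! q))"
    by (rule Suc.IH) (use Suc.prems qQ fQ in auto)
  have "xs ! b \<le> xs ! q" using assms(1) bq ql by (rule sorted_nth_mono)
  then have "(\<Prod>j<b. real (xs ! j)) * real (xs ! b) \<le> (\<Prod>q\<in>Q - {q}. real (xs ! q)) * real (xs ! q)"
    using IH by (intro mult_mono) (auto intro: prod_nonneg)
  also have "\<dots> = (\<Prod>q\<in>Q. real (xs ! q))"
    using fQ qQ by (simp add: prod.remove mult.commute)
  finally show ?case by simp
qed

lemma prod_sorted_le_suffix:
  fixes xs :: "nat list"
  assumes "sorted xs" "Q \<subseteq> {..<length xs}" "card Q = b"
  shows "(\<Prod>q\<in>Q. real (xs ! q)) \<le> (\<Prod>j\<in>{length xs - b..<length xs}. real (xs ! j))"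
  using assms(2,3)
proof (induction b arbitrary: Q)
  case 0
  then have "Q = {}" using finite_subset[OF _ finite_lessThan] by (metis card_0_eq)
  then show ?case by simp
next
  case (Suc b)
  have fQ: "finite Q" using Suc.prems(1) finite_subset by blast
  then have ne: "Q \<noteq> {}" using Suc.prems(2) by auto
  define q where "q = Min Q"
  have qQ: "q \<in> Q" using fQ ne by (simp add: q_def)
  have "Q \<subseteq> {q..<length xs}" using fQ Suc.prems(1) by (auto simp: q_def)
  then have "card Q \<le> card {q..<length xs}" by (intro card_mono) auto
  then have bq: "q \<le> length xs - Suc b" using Suc.prems(2) by simp
  have "card Q \<le> card {..<length xs}" using Suc.prems(1) by (intro card_mono) auto
  then have bl: "Suc b \<le> length xs" using Suc.prems(2) by simp
  have IH: "(\<Prod>q\<in>Q - {q}. real (xs ! q)) \<le> (\<Prod>j\<in>{length xs - b..<length xs}. real (xs ! j))"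
    by (rule Suc.IH) (use Suc.prems qQ fQ in auto)
  have "xs ! q \<le> xs ! (length xs - Suc b)" using assms(1) bq bl by (intro sorted_nth_mono) auto
  then have "(\<Prod>q\<in>Q - {q}. real (xs ! q)) * real (xs ! q) \<le>
      (\<Prod>j\<in>{length xs - b..<length xs}. real (xs ! j)) * real (xs ! (length xs - Suc b))"
    using IH by (intro mult_mono) (auto intro: prod_nonneg)
  also have "\<dots> = (\<Prod>j\<in>{length xs - Suc b..<length xs}. real (xs ! j))"
  proof -
    have "{length xs - Suc b..<length xs} = insert (length xs - Suc b) {length xs - b..<length xs}"
      using bl by auto
    moreover have "length xs - Suc b \<notin> {length xs - b..<length xs}" using bl by auto
    ultimately show ?thesis by (simp add: mult.commute)
  qed
  finally show ?case using fQ qQ by (simp add: prod.remove mult.commute)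
qed

lemma inj_on_add_mod:
  fixes m k :: nat
  assumes "b \<le> k"
  shows "inj_on (\<lambda>t. (t + m) mod k) {..<b}"
proof -
  have "t = t'" if "t' \<le> t" "t < k" "(t + m) mod k = (t' + m) mod k" for t t'
  proof -
    have "k dvd (t + m) - (t' + m)"
      using that by (subst mod_eq_dvd_iff_nat[symmetric]) auto
    then have "k dvd t - t'" by simp
    moreover have "t - t' < k" using that by auto
    ultimately have "t - t' = 0" using dvd_imp_le by (metis neq0_conv not_le)
    then show ?thesis using \<open>t' \<le> t\<close> by simp
  qed
  then show ?thesis
    using assms by (intro inj_onI) (metis le_cases lessThan_iff order_less_le_trans)
qed

lemma sum_lessThan_add: "(\<Sum>q<a + (b::nat). g q) = (\<Sum>q<a. g q) + (\<Sum>j<b. g (a + j))"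
  by (induction b) (simp_all add: algebra_simps)

lemma sum_lessThan_div_mod:
  fixes k :: nat
  assumes "0 < k" "i \<le> k"
  shows "(\<Sum>q<N * k + i. f (q div k) (q mod k)) = (\<Sum>m<N. \<Sum>j<k. f m j) + (\<Sum>j<i. f N j)"
  using assms(2)
proof (induction i)
  case 0
  show ?case
  proof (induction N)
    case 0 then show ?case by simp
  next
    case (Suc N)
    have "(\<Sum>q<Suc N * k + 0. f (q div k) (q mod k)) = (\<Sum>q<N * k + k. f (q div k) (q mod k))"
      by (simp add: algebra_simps)
    also have "\<dots> = (\<Sum>q<N * k. f (q div k) (q mod k)) +
        (\<Sum>j<k. f ((N * k + j) div k) ((N * k + j) mod k))"
      by (rule sum_lessThan_add)
    also have "(\<Sum>j<k. f ((N * k + j) div k) ((N * k + j) mod k)) = (\<Sum>j<k. f N j)"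
      using assms(1) by (intro sum.cong) auto
    finally show ?case using Suc by simp
  qed
next
  case (Suc i)
  have "(N * k + i) div k = N" "(N * k + i) mod k = i" using Suc.prems assms(1) by auto
  then show ?case using Suc by (simp add: add.assoc)
qed

lemma sum_lessThan_diff_eq: "(\<Sum>q<(r::nat). f (r - q)) = (\<Sum>l=1..r. f l)"
proof (induction r)
  case 0 then show ?case by simp
next
  case (Suc r)
  have "(\<Sum>q<Suc r. f (Suc r - q)) = f (Suc r) + (\<Sum>q<r. f (Suc r - Suc q))"
    by (subst sum.lessThan_Suc_shift) simp
  also have "(\<Sum>q<r. f (Suc r - Suc q)) = (\<Sum>l=1..r. f l)" using Suc by simp
  finally show ?case by (simp add: add.commute)
qed

lemma mult_one_minus_power_le:
  "0 \<le> (z::real) \<Longrightarrow> z \<le> 1 \<Longrightarrow> real n * (1 - z) * z ^ n \<le> 1 - z ^ n"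
proof (induction n)
  case 0 then show ?case by simp
next
  case (Suc n)
  have zz: "z ^ Suc n \<le> z ^ n" using Suc.prems by (simp add: mult_left_le_one_le)
  have "real (Suc n) * (1 - z) * z ^ Suc n = real n * (1 - z) * z ^ Suc n + (1 - z) * z ^ Suc n"
    by (simp add: algebra_simps)
  also have "\<dots> \<le> real n * (1 - z) * z ^ n + (1 - z) * z ^ n"
    using zz Suc.prems by (intro add_mono mult_left_mono) auto
  also have "\<dots> \<le> (1 - z ^ n) + (z ^ n - z ^ Suc n)"
    using Suc by (simp add: algebra_simps)
  finally show ?case by simp
qed

lemma suminf_power_le_of_gain:
  fixes q :: "nat \<Rightarrow> real" and N :: "nat \<Rightarrow> nat"
  assumes q0: "\<And>r. 0 \<le> q r" and q: "q sums 1" and z: "0 \<le> z" "z \<le> 1"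
    and gain: "1 - z \<le> (\<Sum>r\<in>{1..<K}. q r * (1 - z ^ N r))"
  shows "(\<Sum>r. q r * (if r = 0 then 1 else z ^ N r)) \<le> z"
proof -
  define w where "w r = (if r = 0 then 0 else 1 - z ^ N r)" for r
  have w: "0 \<le> w r" "w r \<le> 1" for r
    using z by (simp_all add: w_def power_le_one)
  have qw: "summable (\<lambda>r. q r * w r)"
    using q0 w by (intro summable_comparison_test[OF _ sums_summable[OF q]]) (auto intro!: mult_left_le)
  have "(\<Sum>r\<in>{1..<K}. q r * (1 - z ^ N r)) = (\<Sum>r\<in>{1..<K}. q r * w r)"
    by (intro sum.cong) (auto simp: w_def)
  then have "1 - z \<le> (\<Sum>r\<in>{1..<K}. q r * w r)"
    using gain by simp
  also have "\<dots> \<le> (\<Sum>r<K. q r * w r)"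
    using q0 w by (intro sum_mono2) auto
  also have "\<dots> \<le> (\<Sum>r. q r * w r)"
    using q0 w by (intro sum_le_suminf[OF qw]) auto
  finally have "(\<Sum>r. q r - q r * w r) \<le> z"
    using suminf_diff[OF sums_summable[OF q] qw] sums_unique[OF q] by simp
  moreover have "(\<lambda>r. q r - q r * w r) = (\<lambda>r. q r * (if r = 0 then 1 else z ^ N r))"
    by (auto simp: w_def fun_eq_iff algebra_simps)
  ultimately show ?thesis by simp
qed

text \<open>With \<open>A = (\<Sum>r\<in>{1..<K}. q r * N r) > 1\<close>, \<open>L \<ge> N r\<close> and \<open>z = root L (1 / A)\<close>, Bernoulli's
  bound \<open>1 - z ^ n \<ge> n * (1 - z) * z ^ L\<close> makes the gain at least \<open>A * (1 - z) * z ^ L = 1 - z\<close>.\<close>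
lemma exists_fixpoint_below_one:
  fixes q :: "nat \<Rightarrow> real" and N :: "nat \<Rightarrow> nat"
  assumes q0: "\<And>r. 0 \<le> q r" and q: "q sums 1" and N0: "N 0 = 1" and N1: "\<And>r. 1 \<le> N r"
    and K: "1 + q 0 < (\<Sum>r<K. q r * real (N r))"
  obtains z where "0 \<le> z" "z < 1" "(\<Sum>r. q r * (if r = 0 then 1 else z ^ N r)) \<le> z"
proof -
  define A where "A = (\<Sum>r\<in>{1..<K}. q r * real (N r))"
  have "K \<noteq> 0"
  proof
    assume "K = 0"
    with K q0[of 0] show False by simp
  qed
  then have "(\<Sum>r<K. q r * real (N r)) = q 0 + A"
    using N0 by (simp add: A_def atLeast0LessThan[symmetric] sum.atLeast_Suc_lessThan)
  then have A: "1 < A" using K by simp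
  define L where "L = (\<Sum>r<K. N r)"
  have NL: "N r \<le> L" if "r < K" for r
    unfolding L_def using that by (intro member_le_sum) auto
  have "0 < L" using NL[of 0] N1[of 0] \<open>K \<noteq> 0\<close> by simp
  define z where "z = root L (1 / A)"
  have z: "0 < z" "z < 1" and zL: "z ^ L = 1 / A"
    using A \<open>0 < L\<close> by (simp_all add: z_def real_root_pow_pos)
  have contrib: "q r * real (N r) * ((1 - z) * z ^ L) \<le> q r * (1 - z ^ N r)"
    if "r \<in> {1..<K}" for r
  proof -
    have "real (N r) * ((1 - z) * z ^ L) \<le> real (N r) * (1 - z) * z ^ N r"
      using NL[of r] that z by (simp add: mult.assoc mult_left_mono power_decreasing)
    also have "\<dots> \<le> 1 - z ^ N r"
      using z by (intro mult_one_minus_power_le) auto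
    finally show ?thesis using q0[of r] by (simp add: mult.assoc mult_left_mono)
  qed
  have "1 - z = A * ((1 - z) * z ^ L)" using zL A by simp
  also have "\<dots> = (\<Sum>r\<in>{1..<K}. q r * real (N r) * ((1 - z) * z ^ L))"
    by (simp add: A_def sum_distrib_right)
  also have "\<dots> \<le> (\<Sum>r\<in>{1..<K}. q r * (1 - z ^ N r))"
    by (rule sum_mono) (rule contrib)
  finally have "(\<Sum>r. q r * (if r = 0 then 1 else z ^ N r)) \<le> z"
    using q0 q z by (intro suminf_power_le_of_gain) auto
  with z show ?thesis by (intro that) simp_all
qed

lemma sum_nn_integral_pmf_eq_suminf:
  fixes a :: "nat \<Rightarrow> real" and f :: "nat \<Rightarrow> nat \<Rightarrow> real" and I :: "nat set"
  assumes a0: "\<And>i. 0 \<le> a i" and f0: "\<And>i r. 0 \<le> f i r"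
  shows "(\<Sum>i\<in>I. ennreal (a i) * (\<integral>\<^sup>+r. ennreal (f i r) \<partial>measure_pmf p)) =
    (\<Sum>r. ennreal (pmf p r * (\<Sum>i\<in>I. a i * f i r)))"
proof -
  have "(\<Sum>i\<in>I. ennreal (a i) * (\<integral>\<^sup>+r. ennreal (f i r) \<partial>measure_pmf p)) =
      (\<Sum>i\<in>I. \<integral>\<^sup>+r. ennreal (a i * f i r) \<partial>measure_pmf p)"
    by (intro sum.cong refl) (simp add: ennreal_mult a0 f0 nn_integral_cmult)
  also have "\<dots> = (\<integral>\<^sup>+r. (\<Sum>i\<in>I. ennreal (a i * f i r)) \<partial>measure_pmf p)"
    by (rule nn_integral_sum[symmetric]) simp
  also have "\<dots> = (\<integral>\<^sup>+r. ennreal (\<Sum>i\<in>I. a i * f i r) \<partial>measure_pmf p)"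
    using a0 f0 by (simp add: sum_ennreal)
  also have "\<dots> = (\<Sum>r. ennreal (pmf p r) * ennreal (\<Sum>i\<in>I. a i * f i r))"
    by (simp add: nn_integral_measure_pmf nn_integral_count_space_nat)
  also have "\<dots> = (\<Sum>r. ennreal (pmf p r * (\<Sum>i\<in>I. a i * f i r)))"
  proof -
    have nn: "0 \<le> (\<Sum>i\<in>I. a i * f i r)" for r by (intro sum_nonneg) (simp add: a0 f0)
    show ?thesis by (simp add: ennreal_mult nn)
  qed
  finally show ?thesis .
qed

section \<open>Periodic degree sequences\<close>

locale periodic_degrees =
  fixes k :: nat and d :: "nat \<Rightarrow> nat"
  assumes k_pos: "1 \<le> k" and d_ge_2: "\<forall>i<k. 2 \<le> d i"
begin

abbreviation ds where "ds \<equiv> sorted_d k d"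

text \<open>In the paper's notation \<open>least_prod i = d_(1) \<cdots> d_(i)\<close> and
  \<open>greatest_prod i = d_(k+1-i) \<cdots> d_(k)\<close>, so \<open>c_i = least_prod i / G^i\<close>, \<open>c'_i = greatest_prod i / G^i\<close>.\<close>
definition least_prod :: "nat \<Rightarrow> real" where
  "least_prod b = (\<Prod>j<b. real (ds ! j))"

definition greatest_prod :: "nat \<Rightarrow> real" where
  "greatest_prod b = (\<Prod>j\<in>{k-b..<k}. real (ds ! j))"

definition period_prod :: real where
  "period_prod = (\<Prod>j<k. real (d j))"

lemma length_ds [simp]: "length ds = k"
  by (simp add: sorted_d_def)

lemma sorted_ds: "sorted ds"
  by (simp add: sorted_d_def)

lemma ds_permutation:
  obtains \<sigma> where "\<sigma> permutes {..<k}" "\<And>i. i < k \<Longrightarrow> ds ! i = d (\<sigma> i)"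
proof -
  have "mset ds = mset (map d [0..<k])" by (simp add: sorted_d_def)
  then obtain \<sigma> where \<sigma>: "\<sigma> permutes {..<length (map d [0..<k])}" "permute_list \<sigma> (map d [0..<k]) = ds"
    by (rule mset_eq_permutation)
  have "ds ! i = d (\<sigma> i)" if "i < k" for i
  proof -
    have "ds ! i = permute_list \<sigma> (map d [0..<k]) ! i" using \<sigma>(2) by simp
    also have "\<dots> = map d [0..<k] ! \<sigma> i" using \<sigma>(1) that by (intro permute_list_nth) auto
    also have "\<dots> = d (\<sigma> i)" using permutes_in_image[OF \<sigma>(1)] that by simp
    finally show ?thesis .
  qed
  then show ?thesis using that \<sigma>(1) by simp
qed

lemma ds_ge_2: "j < k \<Longrightarrow> 2 \<le> ds ! j"
proof -
  assume j: "j < k"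
  obtain \<sigma> where \<sigma>: "\<sigma> permutes {..<k}" "\<And>i. i < k \<Longrightarrow> ds ! i = d (\<sigma> i)"
    using ds_permutation by blast
  have "\<sigma> j < k" using permutes_in_image[OF \<sigma>(1)] j by simp
  then show ?thesis using \<sigma>(2)[OF j] d_ge_2 by simp
qed

lemma prod_degrees_bounds:
  assumes "Q \<subseteq> {..<k}" "card Q = b"
  shows "least_prod b \<le> (\<Prod>j\<in>Q. real (d j))" "(\<Prod>j\<in>Q. real (d j)) \<le> greatest_prod b"
proof -
  obtain \<sigma> where \<sigma>: "\<sigma> permutes {..<k}" "\<And>i. i < k \<Longrightarrow> ds ! i = d (\<sigma> i)"
    using ds_permutation by blast
  define Q' where "Q' = {i \<in> {..<k}. \<sigma> i \<in> Q}"
  have img: "\<sigma> ` Q' = Q"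
  proof
    show "\<sigma> ` Q' \<subseteq> Q" by (auto simp: Q'_def)
    show "Q \<subseteq> \<sigma> ` Q'"
    proof
      fix q assume q: "q \<in> Q"
      then have "q \<in> \<sigma> ` {..<k}" using permutes_image[OF \<sigma>(1)] assms(1) by auto
      then obtain i where "i < k" "q = \<sigma> i" by auto
      then show "q \<in> \<sigma> ` Q'" using q by (auto simp: Q'_def)
    qed
  qed
  have inj: "inj_on \<sigma> Q'" using permutes_inj_on[OF \<sigma>(1)] .
  have eq: "(\<Prod>j\<in>Q. real (d j)) = (\<Prod>i\<in>Q'. real (ds ! i))"
  proof -
    have "(\<Prod>j\<in>Q. real (d j)) = (\<Prod>i\<in>Q'. real (d (\<sigma> i)))"
      unfolding img[symmetric] using inj by (simp add: prod.reindex)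
    also have "\<dots> = (\<Prod>i\<in>Q'. real (ds ! i))" using \<sigma>(2) by (intro prod.cong) (auto simp: Q'_def)
    finally show ?thesis .
  qed
  have cQ': "card Q' = b" using card_image[OF inj] img assms(2) by simp
  have sQ': "Q' \<subseteq> {..<length ds}" by (auto simp: Q'_def)
  show "least_prod b \<le> (\<Prod>j\<in>Q. real (d j))"
    unfolding eq least_prod_def using prod_prefix_le_sorted[OF sorted_ds sQ' cQ'] .
  show "(\<Prod>j\<in>Q. real (d j)) \<le> greatest_prod b"
    unfolding eq greatest_prod_def using prod_sorted_le_suffix[OF sorted_ds sQ' cQ'] by simp
qed

lemma period_prod_eq_least_prod: "period_prod = least_prod k"
  and period_prod_eq_greatest_prod: "period_prod = greatest_prod k"
proof -
  have "least_prod k = greatest_prod k"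
    by (simp add: least_prod_def greatest_prod_def atLeast0LessThan)
  moreover have "least_prod k \<le> period_prod" "period_prod \<le> greatest_prod k"
    using prod_degrees_bounds[of "{..<k}" k] by (auto simp: period_prod_def)
  ultimately show "period_prod = least_prod k" "period_prod = greatest_prod k" by auto
qed

definition window_prod :: "nat \<Rightarrow> nat \<Rightarrow> real" where
  "window_prod m l = (\<Prod>t<l. real (d ((t + m) mod k)))"

lemma window_prod_add:
  "window_prod m (l1 + l2) = window_prod m l1 * window_prod (m + l1) l2"
proof (induction l2)
  case 0 then show ?case by (simp add: window_prod_def)
next
  case (Suc l2)
  have "window_prod m (l1 + Suc l2) = window_prod m (l1 + l2) * real (d ((l1 + l2 + m) mod k))"
    by (simp add: window_prod_def)
  also have "\<dots> = window_prod m l1 * (window_prod (m + l1) l2 * real (d ((l2 + (m + l1)) mod k)))"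
    using Suc by (simp add: algebra_simps)
  also have "\<dots> = window_prod m l1 * window_prod (m + l1) (Suc l2)" by (simp add: window_prod_def)
  finally show ?case .
qed

lemma window_prod_bounds:
  assumes "b \<le> k"
  shows "least_prod b \<le> window_prod m b" "window_prod m b \<le> greatest_prod b"
proof -
  define Q where "Q = (\<lambda>t. (t + m) mod k) ` {..<b}"
  have inj: "inj_on (\<lambda>t. (t + m) mod k) {..<b}"
    using assms by (rule inj_on_add_mod)
  have eq: "window_prod m b = (\<Prod>j\<in>Q. real (d j))"
    unfolding window_prod_def Q_def using inj by (simp add: prod.reindex)
  have sub: "Q \<subseteq> {..<k}" using k_pos by (auto simp: Q_def)
  have c: "card Q = b" using card_image[OF inj] by (simp add: Q_def)
  show "least_prod b \<le> window_prod m b" "window_prod m b \<le> greatest_prod b"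
    using prod_degrees_bounds[OF sub c] eq by auto
qed

lemma window_prod_period: "window_prod m k = period_prod"
  using window_prod_bounds[of k m] period_prod_eq_least_prod period_prod_eq_greatest_prod by auto

lemma window_prod_mult_period: "window_prod m (a * k) = period_prod ^ a"
proof (induction a arbitrary: m)
  case 0 then show ?case by (simp add: window_prod_def)
next
  case (Suc a)
  have "window_prod m (Suc a * k) = window_prod m (k + a * k)" by simp
  also have "\<dots> = window_prod m k * window_prod (m + k) (a * k)" by (rule window_prod_add)
  also have "\<dots> = period_prod * period_prod ^ a" using Suc by (simp add: window_prod_period)
  finally show ?case by simp
qed

lemma window_prod_eq:
  "window_prod m (a * k + b) = period_prod ^ a * window_prod (m + a * k) b"
  using window_prod_add[of m "a * k" b] window_prod_mult_period by simp

lemma least_prod_nonneg: "0 \<le> least_prod b"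
  by (simp add: least_prod_def prod_nonneg)

lemma greatest_prod_nonneg: "0 \<le> greatest_prod b"
  by (simp add: greatest_prod_def prod_nonneg)

lemma period_prod_pos: "0 < period_prod"
  unfolding period_prod_def using d_ge_2 by (intro prod_pos) force

lemma least_prod_pos: "b \<le> k \<Longrightarrow> 0 < least_prod b"
  unfolding least_prod_def
proof (intro prod_pos)
  fix a assume "b \<le> k" "a \<in> {..<b}"
  then have "a < k" by auto
  then show "0 < real (ds ! a)" using ds_ge_2[of a] by simp
qed

lemma greatest_least_prod_le:
  assumes "b + j \<le> k"
  shows "greatest_prod b * least_prod j \<le> greatest_prod (b + j)"
proof -
  have "greatest_prod (b + j) = (\<Prod>q\<in>{k - (b + j)..<k - b}. real (ds ! q)) * greatest_prod b"
    unfolding greatest_prod_def using assms by (subst prod.atLeastLessThan_concat[symmetric]) auto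
  moreover have "least_prod j \<le> (\<Prod>q\<in>{k - (b + j)..<k - b}. real (ds ! q))"
    unfolding least_prod_def by (rule prod_prefix_le_sorted[OF sorted_ds]) (use assms in auto)
  ultimately show ?thesis using greatest_prod_nonneg[of b] by (metis mult.commute mult_left_mono)
qed

lemma greatest_least_prod_le_wrap:
  assumes "k \<le> b + j" "b \<le> k" "j \<le> k"
  shows "greatest_prod b * least_prod j \<le> period_prod * greatest_prod (b + j - k)"
proof -
  have bj: "least_prod j = least_prod (k - b) * (\<Prod>q\<in>{k - b..<j}. real (ds ! q))"
    unfolding least_prod_def using assms
    by (simp add: atLeast0LessThan[symmetric] prod.atLeastLessThan_concat)
  have X: "(\<Prod>q\<in>{k - b..<j}. real (ds ! q)) \<le> greatest_prod (b + j - k)"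
  proof -
    have "(\<Prod>q\<in>{k - b..<j}. real (ds ! q)) \<le>
        (\<Prod>q\<in>{length ds - (b + j - k)..<length ds}. real (ds ! q))"
      by (rule prod_sorted_le_suffix[OF sorted_ds]) (use assms in auto)
    then show ?thesis by (simp add: greatest_prod_def)
  qed
  have Pk: "period_prod = least_prod (k - b) * greatest_prod b"
  proof -
    have "least_prod k = least_prod (k - b) * greatest_prod b"
      unfolding least_prod_def greatest_prod_def using assms
      by (simp add: atLeast0LessThan[symmetric] prod.atLeastLessThan_concat)
    then show ?thesis using period_prod_eq_least_prod by simp
  qed
  have "greatest_prod b * least_prod j =
      (least_prod (k - b) * greatest_prod b) * (\<Prod>q\<in>{k - b..<j}. real (ds ! q))"
    using bj by (simp add: algebra_simps)
  also have "\<dots> \<le> (least_prod (k - b) * greatest_prod b) * greatest_prod (b + j - k)"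
    using X least_prod_nonneg greatest_prod_nonneg by (intro mult_left_mono) auto
  finally show ?thesis using Pk by simp
qed

lemma window_prod_mult_least_prod_le:
  assumes "q < r"
  shows "window_prod m (r - q) * (period_prod ^ (q div k) * least_prod (q mod k)) \<le>
    period_prod ^ (r div k) * greatest_prod (r mod k)"
proof -
  define l where "l = r - q"
  define a where "a = l div k"
  define b where "b = l mod k"
  define m1 where "m1 = q div k"
  define j where "j = q mod k"
  have bk: "b < k" "j < k" using k_pos by (auto simp: b_def j_def)
  have r_eq: "r = (a + m1) * k + (b + j)"
    using assms by (simp add: a_def b_def m1_def j_def l_def algebra_simps)
  have "window_prod m l = period_prod ^ a * window_prod (m + a * k) b"
    using window_prod_eq[of m a b] by (simp add: a_def b_def)
  also have "\<dots> \<le> period_prod ^ a * greatest_prod b"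
    using window_prod_bounds[of b] bk period_prod_pos by (intro mult_left_mono) auto
  finally have Pl: "window_prod m l \<le> period_prod ^ a * greatest_prod b" .
  have "window_prod m l * (period_prod ^ m1 * least_prod j) \<le>
      period_prod ^ a * greatest_prod b * (period_prod ^ m1 * least_prod j)"
    using Pl least_prod_nonneg period_prod_pos by (intro mult_right_mono) auto
  also have "\<dots> = period_prod ^ (a + m1) * (greatest_prod b * least_prod j)" by (simp add: power_add algebra_simps)
  also have "\<dots> \<le> period_prod ^ (r div k) * greatest_prod (r mod k)"
  proof (cases "b + j < k")
    case True
    then have "r div k = a + m1" "r mod k = b + j" using r_eq by simp_all
    moreover have "greatest_prod b * least_prod j \<le> greatest_prod (b + j)" using greatest_least_prod_le True by simp
    ultimately show ?thesis using period_prod_pos by (simp add: mult_left_mono)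
  next
    case False
    define c where "c = a + m1 + 1"
    then have r2: "r = c * k + (b + j - k)" using r_eq False by (simp add: algebra_simps)
    have "b + j - k < k" using bk by simp
    then have "r div k = c" "r mod k = b + j - k" using r2 by simp_all
    then have "r div k = a + m1 + 1" "r mod k = b + j - k" by (simp_all add: c_def)
    moreover have "greatest_prod b * least_prod j \<le> period_prod * greatest_prod (b + j - k)"
      using greatest_least_prod_le_wrap False bk by simp
    ultimately show ?thesis using period_prod_pos by (simp add: mult_left_mono power_add algebra_simps)
  qed
  finally show ?thesis by (simp add: l_def m1_def j_def)
qed

lemma Gm_eq_powr: "Gm k d = period_prod powr (1 / real k)"
  by (simp add: Gm_def period_prod_def)

lemma Gm_pos: "0 < Gm k d"
  using period_prod_pos by (simp add: Gm_eq_powr)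

lemma Gm_power_k: "Gm k d ^ k = period_prod"
proof -
  have "Gm k d ^ k = Gm k d powr real k" using Gm_pos by (simp add: powr_realpow)
  also have "\<dots> = period_prod powr (1 / real k * real k)" by (simp add: Gm_eq_powr powr_powr)
  also have "\<dots> = period_prod" using k_pos period_prod_pos by simp
  finally show ?thesis .
qed

lemma Gm_power_eq: "Gm k d ^ r = period_prod ^ (r div k) * Gm k d ^ (r mod k)"
proof -
  have "Gm k d ^ r = Gm k d ^ (k * (r div k) + r mod k)" by (simp only: mult_div_mod_eq)
  also have "\<dots> = (Gm k d ^ k) ^ (r div k) * Gm k d ^ (r mod k)"
    by (simp only: power_add power_mult)
  finally show ?thesis by (simp only: Gm_power_k)
qed

lemma Ind_eq: "i < k \<Longrightarrow> Ind k i r = (if r mod k = i then 1 else 0)"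
proof -
  assume i: "i < k"
  have "(\<exists>n. r = n * k + i) \<longleftrightarrow> r mod k = i"
  proof
    assume "\<exists>n. r = n * k + i"
    then obtain n where "r = n * k + i" by auto
    then show "r mod k = i" using i by simp
  next
    assume "r mod k = i"
    then have "r = (r div k) * k + i" using div_mult_mod_eq[of r k] by simp
    then show "\<exists>n. r = n * k + i" by blast
  qed
  then show ?thesis by (simp add: Ind_def)
qed

lemma cc_eq_least_prod: "cc k d i = least_prod i / Gm k d ^ i"
  by (simp add: cc_def least_prod_def)

lemma cbar_eq_greatest_prod: "cbar k d i = greatest_prod i / Gm k d ^ i"
  by (simp add: cbar_def greatest_prod_def)

lemma xlow_eq_least_prod: "xlow k d n j = period_prod ^ n * least_prod j"
  by (simp add: xlow_def least_prod_def period_prod_def)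

lemma cc_mult_Gm_power:
  "cc k d (r mod k) * Gm k d ^ r = period_prod ^ (r div k) * least_prod (r mod k)"
proof -
  have "cc k d (r mod k) * Gm k d ^ r =
      least_prod (r mod k) / Gm k d ^ (r mod k) * (period_prod ^ (r div k) * Gm k d ^ (r mod k))"
    by (simp only: cc_eq_least_prod Gm_power_eq[of r])
  then show ?thesis using Gm_pos by simp
qed

lemma cbar_mult_Gm_power:
  "cbar k d (r mod k) * Gm k d ^ r = period_prod ^ (r div k) * greatest_prod (r mod k)"
proof -
  have "cbar k d (r mod k) * Gm k d ^ r =
      greatest_prod (r mod k) / Gm k d ^ (r mod k) * (period_prod ^ (r div k) * Gm k d ^ (r mod k))"
    by (simp only: cbar_eq_greatest_prod Gm_power_eq[of r])
  then show ?thesis using Gm_pos by simp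
qed

lemma sum_Ind_eq: "(\<Sum>i<k. a i * (b i * Ind k i r)) = a (r mod k) * b (r mod k)"
proof -
  have "(\<Sum>i<k. a i * (b i * Ind k i r)) = (\<Sum>i<k. if r mod k = i then a i * b i else 0)"
    by (intro sum.cong) (auto simp: Ind_eq)
  also have "\<dots> = a (r mod k) * b (r mod k)" using k_pos by (simp add: sum.delta)
  finally show ?thesis .
qed

text \<open>The paper's \<open>x_(N,i)\<close> for \<open>r = N k + i\<close>: the fewest descendants \<open>r\<close> levels below any vertex.\<close>
definition min_descendants :: "nat \<Rightarrow> nat" where
  "min_descendants r = (\<Prod>j<k. d j) ^ (r div k) * (\<Prod>j<r mod k. ds ! j)"

lemma real_min_descendants:
  "real (min_descendants r) = period_prod ^ (r div k) * least_prod (r mod k)"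
  by (simp add: min_descendants_def period_prod_def least_prod_def of_nat_prod)

lemma min_descendants_le: "min_descendants r \<le> (\<Prod>t<r. d ((t + m) mod k))"
proof -
  have "real (min_descendants r) = period_prod ^ (r div k) * least_prod (r mod k)"
    by (rule real_min_descendants)
  also have "\<dots> \<le> period_prod ^ (r div k) * window_prod (m + (r div k) * k) (r mod k)"
    using window_prod_bounds[of "r mod k"] k_pos period_prod_pos by (intro mult_left_mono) auto
  also have "\<dots> = window_prod m ((r div k) * k + r mod k)" by (rule window_prod_eq[symmetric])
  also have "\<dots> = real (\<Prod>t<r. d ((t + m) mod k))" by (simp add: window_prod_def of_nat_prod)
  finally show ?thesis by (simp only: of_nat_le_iff)
qed

lemma min_descendants_pos: "1 \<le> min_descendants r"
proof -
  have "0 < real (min_descendants r)"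
    unfolding real_min_descendants using period_prod_pos least_prod_pos[of "r mod k"] k_pos by simp
  then show ?thesis by simp
qed

lemma min_descendants_0: "min_descendants 0 = 1" by (simp add: min_descendants_def)

lemma sum_cc_Ind_eq:
  "(\<Sum>i<k. cc k d i * (Gm k d ^ r * Ind k i r)) = real (min_descendants r)"
  using sum_Ind_eq[of "cc k d" "\<lambda>_. Gm k d ^ r" r] cc_mult_Gm_power real_min_descendants by simp

definition descendant_bound :: "nat \<Rightarrow> real" where
  "descendant_bound r = cbar k d (r mod k) * hh k d (r mod k) r"

lemma sum_cbar_Ind_eq:
  "(\<Sum>i<k. cbar k d i * (hh k d i r * Ind k i r)) = descendant_bound r"
  using sum_Ind_eq[of "cbar k d" "\<lambda>i. hh k d i r" r] by (simp add: descendant_bound_def)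

lemma hh_eq_sum:
  "hh k d (r mod k) r = (\<Sum>q<r. 1 / xlow k d (q div k) (q mod k)) * Gm k d ^ r"
proof -
  have N: "(r - r mod k) div k = r div k" using k_pos by (simp add: minus_mod_eq_mult_div)
  have "(\<Sum>q<r. 1 / xlow k d (q div k) (q mod k)) =
      (\<Sum>q<(r div k) * k + r mod k. 1 / xlow k d (q div k) (q mod k))"
    by simp
  also have "\<dots> = (\<Sum>m<r div k. \<Sum>j<k. 1 / xlow k d m j) + (\<Sum>j<r mod k. 1 / xlow k d (r div k) j)"
    using k_pos by (intro sum_lessThan_div_mod[where f="\<lambda>a b. 1 / xlow k d a b"]) auto
  finally show ?thesis by (simp add: hh_def N Let_def)
qed

lemma hh_nonneg: "0 \<le> hh k d i r"
  unfolding hh_def Let_def using Gm_pos period_prod_pos least_prod_nonneg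
  by (intro mult_nonneg_nonneg add_nonneg_nonneg sum_nonneg) (auto simp: xlow_eq_least_prod)

lemma cbar_nonneg: "0 \<le> cbar k d i"
  using Gm_pos greatest_prod_nonneg by (simp add: cbar_eq_greatest_prod)

lemma cc_nonneg: "0 \<le> cc k d i"
  using Gm_pos least_prod_nonneg by (simp add: cc_eq_least_prod)

lemma descendant_bound_nonneg: "0 \<le> descendant_bound r"
  by (simp add: descendant_bound_def cbar_nonneg hh_nonneg)

lemma descendant_count_le:
  "(\<Sum>l=1..r. real (\<Prod>t<l. d ((t + m) mod k))) \<le> descendant_bound r"
proof -
  have "(\<Sum>q<r. window_prod m (r - q)) = (\<Sum>l=1..r. window_prod m l)" by (rule sum_lessThan_diff_eq)
  then have "(\<Sum>l=1..r. real (\<Prod>t<l. d ((t + m) mod k))) = (\<Sum>q<r. window_prod m (r - q))"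
    by (simp add: window_prod_def of_nat_prod)
  also have "\<dots> \<le> (\<Sum>q<r. cbar k d (r mod k) * Gm k d ^ r / xlow k d (q div k) (q mod k))"
  proof (rule sum_mono)
    fix q assume q: "q \<in> {..<r}"
    have pos: "0 < period_prod ^ (q div k) * least_prod (q mod k)"
      using period_prod_pos least_prod_pos[of "q mod k"] k_pos by simp
    have "window_prod m (r - q) \<le>
        period_prod ^ (r div k) * greatest_prod (r mod k) / (period_prod ^ (q div k) * least_prod (q mod k))"
      using window_prod_mult_least_prod_le[of q r m] q pos by (simp add: pos_le_divide_eq)
    then show "window_prod m (r - q) \<le> cbar k d (r mod k) * Gm k d ^ r / xlow k d (q div k) (q mod k)"
      by (simp add: cbar_mult_Gm_power xlow_eq_least_prod)
  qed
  also have "\<dots> = descendant_bound r"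
    by (simp add: descendant_bound_def hh_eq_sum sum_distrib_left sum_distrib_right)
  finally show ?thesis .
qed

lemma sum_cc_expectation_eq:
  "(\<Sum>i<k. ennreal (cc k d i) * (\<integral>\<^sup>+ r. ennreal (Gm k d ^ r * Ind k i r) \<partial>measure_pmf p)) =
    (\<Sum>r. ennreal (pmf p r * real (min_descendants r)))"
proof -
  have "(\<Sum>i<k. ennreal (cc k d i) * (\<integral>\<^sup>+ r. ennreal (Gm k d ^ r * Ind k i r) \<partial>measure_pmf p)) =
      (\<Sum>r. ennreal (pmf p r * (\<Sum>i<k. cc k d i * (Gm k d ^ r * Ind k i r))))"
    by (rule sum_nn_integral_pmf_eq_suminf) (auto simp: cc_nonneg Ind_def Gm_pos less_imp_le)
  then show ?thesis by (simp add: sum_cc_Ind_eq)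
qed

lemma sum_cbar_expectation_eq:
  "(\<Sum>i<k. ennreal (cbar k d i) * (\<integral>\<^sup>+ r. ennreal (hh k d i r * Ind k i r) \<partial>measure_pmf p)) =
    (\<Sum>r. ennreal (pmf p r * descendant_bound r))"
proof -
  have "(\<Sum>i<k. ennreal (cbar k d i) * (\<integral>\<^sup>+ r. ennreal (hh k d i r * Ind k i r) \<partial>measure_pmf p)) =
      (\<Sum>r. ennreal (pmf p r * (\<Sum>i<k. cbar k d i * (hh k d i r * Ind k i r))))"
    by (rule sum_nn_integral_pmf_eq_suminf) (auto simp: cbar_nonneg Ind_def hh_nonneg)
  then show ?thesis by (simp add: sum_cbar_Ind_eq)
qed

lemma percolation_positive:
  assumes "1 + ennreal (pmf p 0) < (\<Sum>r. ennreal (pmf p r * real (min_descendants r)))"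
  shows "0 < measure (perc_space p) {\<omega>. percolates (\<lambda>j. d (j mod k)) \<omega>}"
proof -
  interpret radii p .
  obtain K where "ennreal (1 + pmf p 0) < (\<Sum>r<K. ennreal (pmf p r * real (min_descendants r)))"
    using assms unfolding suminf_eq_SUP by (auto simp: less_SUP_iff ennreal_plus[symmetric])
  also have "\<dots> = ennreal (\<Sum>r<K. pmf p r * real (min_descendants r))"
    by (rule sum_ennreal) simp
  finally have "1 + pmf p 0 < (\<Sum>r<K. pmf p r * real (min_descendants r))"
    by (rule ennreal_less_iff[THEN iffD1, rotated]) simp
  then obtain z where z: "0 \<le> z" "z < 1"
      and fixpoint: "(\<Sum>r. pmf p r * (if r = 0 then 1 else z ^ min_descendants r)) \<le> z"
    using exists_fixpoint_below_one[of "pmf p" min_descendants, OF pmf_nonneg pmf_sums_one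
        min_descendants_0 min_descendants_pos]
    by blast
  have "1 - z \<le> measure M {\<omega>. percolates (\<lambda>j. d (j mod k)) \<omega>}"
    using min_descendants_le z fixpoint by (intro survival_lower_bound) auto
  then show ?thesis using z by simp
qed

lemma percolation_null:
  assumes "(\<Sum>r. ennreal (pmf p r * descendant_bound r)) \<le> 1" and "pmf p 0 < 1"
  shows "measure (perc_space p) {\<omega>. percolates (\<lambda>j. d (j mod k)) \<omega>} = 0"
proof -
  interpret radii p .
  have nonneg: "0 \<le> pmf p r * descendant_bound r" for r
    by (simp add: descendant_bound_nonneg)
  have summable: "summable (\<lambda>r. pmf p r * descendant_bound r)"
    using assms(1) by (intro summable_suminf_not_top[OF nonneg]) (auto simp: top_unique)
  have "(\<Sum>r. pmf p r * descendant_bound r) \<le> 1"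
    using assms(1) suminf_ennreal2[OF nonneg summable] by simp
  then show ?thesis
    using k_pos d_ge_2 descendant_count_le
    by (intro extinction_periodic[OF _ _ _ _ summable_sums[OF summable] _ descendant_bound_nonneg assms(2)])
       (auto simp: offset_def fun_eq_iff mod_add_right_eq)
qed

end

section \<open>The rooted periodic tree\<close>

lemma infected_eq_generation: "infected k d \<omega> n = generation (\<lambda>j. d (j mod k)) \<omega> n"
proof (induction n)
  case 0 then show ?case by simp
next
  case (Suc n)
  have "cone k d \<omega> u = cone_at (\<lambda>j. d (j mod k)) \<omega> u" for u
    by (simp add: cone_def cone_at_def tree_plus_def vertices_def)
  then show ?case using Suc by simp
qed

lemma survives_iff_percolates: "survives k d \<omega> \<longleftrightarrow> percolates (\<lambda>j. d (j mod k)) \<omega>"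
proof -
  have "(\<Union>n. infected k d \<omega> n) = {v. reached (\<lambda>j. d (j mod k)) \<omega> v}"
    by (auto simp: infected_eq_generation reached_iff_generation)
  then show ?thesis by (simp add: survives_def percolates_def)
qed

theorem theorem2:
  fixes k :: nat and d :: "nat \<Rightarrow> nat" and p :: "nat pmf"
  assumes "k \<ge> 1" and "\<forall>i<k. d i \<ge> 2"
    and "0 < pmf p 0" and "pmf p 0 < 1"
  shows "((\<Sum>i<k. ennreal (cc k d i) *
            (\<integral>\<^sup>+ r. ennreal (Gm k d ^ r * Ind k i r) \<partial>measure_pmf p))
           > 1 + ennreal (pmf p 0)
          \<longrightarrow> survival_event k d p \<in> sets (perc_space p)
              \<and> emeasure (perc_space p) (survival_event k d p) > 0)
       \<and> ((\<Sum>i<k. ennreal (cbar k d i) *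
            (\<integral>\<^sup>+ r. ennreal (hh k d i r * Ind k i r) \<partial>measure_pmf p)) \<le> 1
          \<longrightarrow> survival_event k d p \<in> sets (perc_space p)
              \<and> emeasure (perc_space p) (survival_event k d p) = 0)"
proof -
  interpret periodic_degrees k d using assms(1,2) by unfold_locales auto
  interpret radii p .
  let ?V = "{\<omega>. percolates (\<lambda>j. d (j mod k)) \<omega>}"
  have event: "survival_event k d p = ?V"
    by (auto simp: survival_event_def survives_iff_percolates)
  have emeasure: "emeasure M ?V = measure M ?V"
    by (simp add: P.emeasure_eq_measure)
  show ?thesis
    unfolding event sum_cc_expectation_eq sum_cbar_expectation_eq emeasure
    using percolation_positive percolation_null[OF _ assms(4)] by simp
qed

end
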